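(* Let $\mathcal{C}$ be a finite direct category of composition length $N\ge1$. Then $\mathsf{E}^n(\mathcal{C},k)=\mathsf{G}^n(\mathcal{C},k)=0$ for all $n>N$. Moreover, the map $\mathsf{G}^n(\mathcal{C},k)\to H^n(|\mathcal{C}|;\mathbb{Z})$ induced by the cochain map sending $[M]\in\mathrm{Gr}(k\mathcal{G}^{\mathcal{C}}_n)$ to the normalized cochain $\sigma\mapsto\dim_kM(\sigma)$ on non-degenerate $n$-simplices $\sigma$ of the nerve is an isomorphism for all $n\ge\lfloor N/2\rfloor+1$ and an epimorphism for $1\le n\le\lfloor N/2\rfloor$.
   Context: A small category is direct if it has no infinite chain of composable non-identity morphisms and no cycle of non-identity morphisms of positive length. A morphism is irreducible if it is not an identity and in any factorization one factor is an identity; the composition length is the maximal length of a chain of composable irreducible morphisms. Fix a field $k$; modules are functors to finite-dimensional $k$-vector spaces, $\mathrm{Gr}$ is the split Grothendieck group, $F^*M=M\circ F$. For $n\ge0$, $\widetilde{\mathcal{E}}^{\mathcal{C}}_n=\mathcal{C}^{[n]}$ has objects strings $[u_1|\cdots|u_n]$ = $x_0\xrightarrow{u_1}\cdots\xrightarrow{u_n}x_n$ and morphisms commutative ladders $(f_0,\dots,f_n)$; faces $\partial_i$ delete $x_i$ (composing $u_{i+1}u_i$ for $0<i<n$). $\widetilde{\mathcal{G}}^{\mathcal{C}}_n$ has the same objects and as morphisms the identities and, for each $w:x_n\to y_0$, the ladder $f_i=v_i\cdots v_1\,w\,u_n\cdots u_{i+1}$. A string is non-degenerate if no $u_i$ is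 an identity. $\mathcal{E}^{\mathcal{C}}_n$, $\mathcal{G}^{\mathcal{C}}_n$ are the full subcategories of $\widetilde{\mathcal{E}}^{\mathcal{C}}_n$, $\widetilde{\mathcal{G}}^{\mathcal{C}}_n$ on non-degenerate strings ($\mathcal{C}$ itself for $n=0$); with the restricted faces they are semi-simplicial objects, and $\mathsf{E}^*(\mathcal{C},k)$, $\mathsf{G}^*(\mathcal{C},k)$ denote the cohomology of $(\mathrm{Gr}(k\mathcal{E}^{\mathcal{C}}_\bullet),d)$, $(\mathrm{Gr}(k\mathcal{G}^{\mathcal{C}}_\bullet),d)$ with $d^n=\sum_{i=0}^{n+1}(-1)^i\partial_i^*$. *)

theory Defs
  imports Main "Jordan_Normal_Form.Matrix"
begin

record ('o, 'a) cat =
  Ob :: "'o set"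
  Ar :: "'a set"
  Dom :: "'a \<Rightarrow> 'o"
  Cod :: "'a \<Rightarrow> 'o"
  Idm :: "'o \<Rightarrow> 'a"
  Comp :: "'a \<Rightarrow> 'a \<Rightarrow> 'a"   (* Comp g f = g o f *)

definition is_cat :: "('o, 'a, 'z) cat_scheme \<Rightarrow> bool" where
  "is_cat C \<longleftrightarrow>
     (\<forall>a\<in>Ar C. Dom C a \<in> Ob C \<and> Cod C a \<in> Ob C) \<and>
     (\<forall>x\<in>Ob C. Idm C x \<in> Ar C \<and> Dom C (Idm C x) = x \<and> Cod C (Idm C x) = x) \<and>
     (\<forall>f\<in>Ar C. \<forall>g\<in>Ar C. Cod C f = Dom C g \<longrightarrow>
        Comp C g f \<in> Ar C \<and> Dom C (Comp C g f) = Dom C f \<and> Cod C (Comp C g f) = Cod C g) \<and>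
     (\<forall>f\<in>Ar C. Comp C (Idm C (Cod C f)) f = f \<and> Comp C f (Idm C (Dom C f)) = f) \<and>
     (\<forall>f\<in>Ar C. \<forall>g\<in>Ar C. \<forall>h\<in>Ar C. Cod C f = Dom C g \<longrightarrow> Cod C g = Dom C h \<longrightarrow>
        Comp C h (Comp C g f) = Comp C (Comp C h g) f)"

definition finite_cat :: "('o, 'a, 'z) cat_scheme \<Rightarrow> bool" where
  "finite_cat C \<longleftrightarrow> finite (Ob C) \<and> finite (Ar C)"

definition non_id :: "('o, 'a, 'z) cat_scheme \<Rightarrow> 'a \<Rightarrow> bool" where
  "non_id C a \<longleftrightarrow> a \<in> Ar C \<and> a \<noteq> Idm C (Dom C a)"

definition composable :: "('o, 'a, 'z) cat_scheme \<Rightarrow> 'a list \<Rightarrow> bool" where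
  "composable C ms \<longleftrightarrow> (\<forall>i. Suc i < length ms \<longrightarrow> Cod C (ms ! i) = Dom C (ms ! Suc i))"

definition direct :: "('o, 'a, 'z) cat_scheme \<Rightarrow> bool" where
  "direct C \<longleftrightarrow>
     \<not> (\<exists>f :: nat \<Rightarrow> 'a. \<forall>i. non_id C (f i) \<and> Cod C (f i) = Dom C (f (Suc i))) \<and>
     \<not> (\<exists>ms. ms \<noteq> [] \<and> (\<forall>m\<in>set ms. non_id C m) \<and> composable C ms \<and>
            Cod C (last ms) = Dom C (hd ms))"

definition irreducible :: "('o, 'a, 'z) cat_scheme \<Rightarrow> 'a \<Rightarrow> bool" where
  "irreducible C a \<longleftrightarrow> non_id C a \<and>
     (\<forall>f\<in>Ar C. \<forall>g\<in>Ar C. Cod C f = Dom C g \<and> Comp C g f = a \<longrightarrow>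
        f = Idm C (Dom C f) \<or> g = Idm C (Dom C g))"

definition irr_chain :: "('o, 'a, 'z) cat_scheme \<Rightarrow> 'a list \<Rightarrow> bool" where
  "irr_chain C ms \<longleftrightarrow> (\<forall>m\<in>set ms. irreducible C m) \<and> composable C ms"

definition comp_length :: "('o, 'a, 'z) cat_scheme \<Rightarrow> nat" where
  "comp_length C = Max {length ms | ms. irr_chain C ms}"

text \<open>Composite of a composable path [m1,...,mk] (m1 first): mk o ... o m1.\<close>
fun path_comp :: "('o, 'a, 'z) cat_scheme \<Rightarrow> 'a list \<Rightarrow> 'a" where
  "path_comp C [] = undefined"
| "path_comp C (m # ms) = fold (\<lambda>g acc. Comp C g acc) ms m"

text \<open>A string [u_1|...|u_n] is encoded as (x_0, [u_1,...,u_n]).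
  A morphism (ladder) is encoded as (source, target, [f_0,...,f_n]).\<close>

type_synonym ('o, 'a) str = "'o \<times> 'a list"
type_synonym ('o, 'a) lad = "('o, 'a) str \<times> ('o, 'a) str \<times> 'a list"

definition obj_at :: "('o, 'a, 'z) cat_scheme \<Rightarrow> ('o, 'a) str \<Rightarrow> nat \<Rightarrow> 'o" where
  "obj_at C s i = (if i = 0 then fst s else Cod C (snd s ! (i - 1)))"

definition is_string :: "('o, 'a, 'z) cat_scheme \<Rightarrow> nat \<Rightarrow> ('o, 'a) str \<Rightarrow> bool" where
  "is_string C n s \<longleftrightarrow> fst s \<in> Ob C \<and> length (snd s) = n \<and> (\<forall>u\<in>set (snd s). u \<in> Ar C) \<and>
     composable C (snd s) \<and> (n > 0 \<longrightarrow> Dom C (hd (snd s)) = fst s)"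

definition nondeg_strings :: "('o, 'a, 'z) cat_scheme \<Rightarrow> nat \<Rightarrow> ('o, 'a) str set" where
  "nondeg_strings C n = {s. is_string C n s \<and> (\<forall>u\<in>set (snd s). u \<noteq> Idm C (Dom C u))}"

definition is_ladder :: "('o, 'a, 'z) cat_scheme \<Rightarrow> nat \<Rightarrow> ('o, 'a) lad \<Rightarrow> bool" where
  "is_ladder C n l \<longleftrightarrow> (case l of (s, t, fs) \<Rightarrow>
     length fs = Suc n \<and>
     (\<forall>i\<le>n. fs ! i \<in> Ar C \<and> Dom C (fs ! i) = obj_at C s i \<and> Cod C (fs ! i) = obj_at C t i) \<and>
     (\<forall>i. 1 \<le> i \<and> i \<le> n \<longrightarrow>
        Comp C (snd t ! (i - 1)) (fs ! (i - 1)) = Comp C (fs ! i) (snd s ! (i - 1))))"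

definition id_ladder :: "('o, 'a, 'z) cat_scheme \<Rightarrow> ('o, 'a) str \<Rightarrow> ('o, 'a) lad" where
  "id_ladder C s = (s, s, map (\<lambda>i. Idm C (obj_at C s i)) [0..<Suc (length (snd s))])"

definition comp_ladder :: "('o, 'a, 'z) cat_scheme \<Rightarrow> ('o, 'a) lad \<Rightarrow> ('o, 'a) lad \<Rightarrow> ('o, 'a) lad" where
  "comp_ladder C g f = (fst f, fst (snd g), map2 (Comp C) (snd (snd g)) (snd (snd f)))"

text \<open>The ladder associated with w : x_n -> y_0: f_i = v_i...v_1 w u_n...u_{i+1}.\<close>
definition w_ladder :: "('o, 'a, 'z) cat_scheme \<Rightarrow> ('o, 'a) str \<Rightarrow> ('o, 'a) str \<Rightarrow> 'a \<Rightarrow> ('o, 'a) lad" where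
  "w_ladder C s t w = (s, t, map (\<lambda>i. path_comp C (drop i (snd s) @ [w] @ take i (snd t)))
                              [0..<Suc (length (snd s))])"

definition E_cat :: "('o, 'a, 'z) cat_scheme \<Rightarrow> nat \<Rightarrow> (('o, 'a) str, ('o, 'a) lad) cat" where
  "E_cat C n = \<lparr> Ob = nondeg_strings C n,
     Ar = {l. fst l \<in> nondeg_strings C n \<and> fst (snd l) \<in> nondeg_strings C n \<and> is_ladder C n l},
     Dom = fst, Cod = (\<lambda>l. fst (snd l)), Idm = id_ladder C, Comp = comp_ladder C \<rparr>"

definition G_cat :: "('o, 'a, 'z) cat_scheme \<Rightarrow> nat \<Rightarrow> (('o, 'a) str, ('o, 'a) lad) cat" where
  "G_cat C n = \<lparr> Ob = nondeg_strings C n,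
     Ar = {id_ladder C s | s. s \<in> nondeg_strings C n} \<union>
          {w_ladder C s t w | s t w. s \<in> nondeg_strings C n \<and> t \<in> nondeg_strings C n \<and>
             w \<in> Ar C \<and> Dom C w = obj_at C s n \<and> Cod C w = obj_at C t 0},
     Dom = fst, Cod = (\<lambda>l. fst (snd l)), Idm = id_ladder C, Comp = comp_ladder C \<rparr>"

text \<open>Face \<partial>_i on strings of length m = n+1 (deletes x_i), 0 \<le> i \<le> m.\<close>
definition face_str :: "('o, 'a, 'z) cat_scheme \<Rightarrow> nat \<Rightarrow> ('o, 'a) str \<Rightarrow> ('o, 'a) str" where
  "face_str C i s = (case s of (x0, us) \<Rightarrow>
     if i = 0 then (Cod C (hd us), tl us)
     else if i = length us then (x0, butlast us)
     else (x0, take (i - 1) us @ [Comp C (us ! i) (us ! (i - 1))] @ drop (Suc i) us))"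

definition face_lad :: "('o, 'a, 'z) cat_scheme \<Rightarrow> nat \<Rightarrow> ('o, 'a) lad \<Rightarrow> ('o, 'a) lad" where
  "face_lad C i l = (case l of (s, t, fs) \<Rightarrow>
     (face_str C i s, face_str C i t, take i fs @ drop (Suc i) fs))"

text \<open>A module over D (functor to finite-dimensional k-vector spaces) is given, up to the
  canonical skeleton of finite-dimensional k-vector spaces, by a dimension for each object and
  a matrix for each morphism.\<close>
type_synonym ('o, 'a, 'k) module = "('o \<Rightarrow> nat) \<times> ('a \<Rightarrow> 'k mat)"

definition is_module :: "'k::field itself \<Rightarrow> ('o, 'a, 'z) cat_scheme \<Rightarrow> ('o, 'a, 'k) module \<Rightarrow> bool" where
  "is_module K D M \<longleftrightarrow> (case M of (d, \<rho>) \<Rightarrow>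
     (\<forall>a\<in>Ar D. \<rho> a \<in> carrier_mat (d (Cod D a)) (d (Dom D a))) \<and>
     (\<forall>x\<in>Ob D. \<rho> (Idm D x) = 1\<^sub>m (d x)) \<and>
     (\<forall>f\<in>Ar D. \<forall>g\<in>Ar D. Cod D f = Dom D g \<longrightarrow> \<rho> (Comp D g f) = \<rho> g * \<rho> f))"

definition Mods :: "'k::field itself \<Rightarrow> ('o, 'a, 'z) cat_scheme \<Rightarrow> ('o, 'a, 'k) module set" where
  "Mods K D = {M. is_module K D M}"

definition iso_mod :: "('o, 'a, 'z) cat_scheme \<Rightarrow> ('o, 'a, 'k::field) module \<Rightarrow> ('o, 'a, 'k) module \<Rightarrow> bool" where
  "iso_mod D M N \<longleftrightarrow> (\<exists>T. (\<forall>x\<in>Ob D. T x \<in> carrier_mat (fst N x) (fst M x) \<and> invertible_mat (T x)) \<and>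
     (\<forall>a\<in>Ar D. T (Cod D a) * snd M a = snd N a * T (Dom D a)))"

definition dsum :: "('o, 'a, 'z) cat_scheme \<Rightarrow> ('o, 'a, 'k::field) module \<Rightarrow> ('o, 'a, 'k) module \<Rightarrow> ('o, 'a, 'k) module" where
  "dsum D M1 M2 = ((\<lambda>x. fst M1 x + fst M2 x),
     (\<lambda>a. four_block_mat (snd M1 a) (0\<^sub>m (fst M1 (Cod D a)) (fst M2 (Dom D a)))
                         (0\<^sub>m (fst M2 (Cod D a)) (fst M1 (Dom D a))) (snd M2 a)))"

inductive_set zspan :: "('b \<Rightarrow> int) set \<Rightarrow> ('b \<Rightarrow> int) set" for S where
  zspan_zero: "(\<lambda>_. 0) \<in> zspan S"
| zspan_add: "x \<in> zspan S \<Longrightarrow> s \<in> S \<Longrightarrow> (\<lambda>b. x b + s b) \<in> zspan S"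
| zspan_diff: "x \<in> zspan S \<Longrightarrow> s \<in> S \<Longrightarrow> (\<lambda>b. x b - s b) \<in> zspan S"

definition gen :: "'b \<Rightarrow> 'b \<Rightarrow> int" where
  "gen M = (\<lambda>N. if N = M then 1 else 0)"

text \<open>Free abelian group on the modules over D, and the relation subgroup; the split
  Grothendieck group Gr(kD) is the quotient FG/Rel.\<close>
definition FG :: "'k::field itself \<Rightarrow> ('o, 'a, 'z) cat_scheme \<Rightarrow> (('o, 'a, 'k) module \<Rightarrow> int) set" where
  "FG K D = zspan {gen M | M. M \<in> Mods K D}"

definition Rel :: "'k::field itself \<Rightarrow> ('o, 'a, 'z) cat_scheme \<Rightarrow> (('o, 'a, 'k) module \<Rightarrow> int) set" where
  "Rel K D = zspan {(\<lambda>N. gen M N - gen M1 N - gen M2 N) | M M1 M2.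
      M \<in> Mods K D \<and> M1 \<in> Mods K D \<and> M2 \<in> Mods K D \<and> iso_mod D M (dsum D M1 M2)}"

definition lin_ext :: "('b \<Rightarrow> 'c) \<Rightarrow> ('b \<Rightarrow> int) \<Rightarrow> ('c \<Rightarrow> int)" where
  "lin_ext g x = (\<lambda>N. \<Sum>M\<in>{M. x M \<noteq> 0 \<and> g M = N}. x M)"

definition pb_face :: "('o, 'a, 'z) cat_scheme \<Rightarrow> nat \<Rightarrow> (('o, 'a) str, ('o, 'a) lad, 'k) module
                        \<Rightarrow> (('o, 'a) str, ('o, 'a) lad, 'k) module" where
  "pb_face C i M = (fst M \<circ> face_str C i, snd M \<circ> face_lad C i)"

definition dgr :: "('o, 'a, 'z) cat_scheme \<Rightarrow> nat \<Rightarrow> ((('o, 'a) str, ('o, 'a) lad, 'k) module \<Rightarrow> int)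
                   \<Rightarrow> ((('o, 'a) str, ('o, 'a) lad, 'k) module \<Rightarrow> int)" where
  "dgr C n x = (\<lambda>N. \<Sum>i\<le>Suc n. (-1) ^ i * lin_ext (pb_face C i) x N)"

text \<open>Cocycles and coboundaries of (Gr(k cat_\<bullet>), d), as subgroups of the free groups
  (preimages of the kernel and the image in Gr).\<close>
definition gr_cocycles :: "'k::field itself \<Rightarrow> ('o, 'a, 'z) cat_scheme \<Rightarrow>
    (nat \<Rightarrow> (('o, 'a) str, ('o, 'a) lad) cat) \<Rightarrow> nat \<Rightarrow> ((('o, 'a) str, ('o, 'a) lad, 'k) module \<Rightarrow> int) set" where
  "gr_cocycles K C cats n = {x \<in> FG K (cats n). dgr C n x \<in> Rel K (cats (Suc n))}"

definition gr_coboundaries :: "'k::field itself \<Rightarrow> ('o, 'a, 'z) cat_scheme \<Rightarrow>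
    (nat \<Rightarrow> (('o, 'a) str, ('o, 'a) lad) cat) \<Rightarrow> nat \<Rightarrow> ((('o, 'a) str, ('o, 'a) lad, 'k) module \<Rightarrow> int) set" where
  "gr_coboundaries K C cats n =
     (if n = 0 then Rel K (cats 0)
      else {(\<lambda>N. dgr C (n - 1) y N + r N) | y r. y \<in> FG K (cats (n - 1)) \<and> r \<in> Rel K (cats n)})"

definition gr_cohom_vanishes :: "'k::field itself \<Rightarrow> ('o, 'a, 'z) cat_scheme \<Rightarrow>
    (nat \<Rightarrow> (('o, 'a) str, ('o, 'a) lad) cat) \<Rightarrow> nat \<Rightarrow> bool" where
  "gr_cohom_vanishes K C cats n \<longleftrightarrow> gr_cocycles K C cats n \<subseteq> gr_coboundaries K C cats n"

text \<open>Non-degenerate n-simplices of the nerve = non-degenerate strings of length n.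
  Normalized integral cochains are functions vanishing off them.\<close>
definition nerve_cochains :: "('o, 'a, 'z) cat_scheme \<Rightarrow> nat \<Rightarrow> (('o, 'a) str \<Rightarrow> int) set" where
  "nerve_cochains C n = {c. \<forall>\<sigma>. \<sigma> \<notin> nondeg_strings C n \<longrightarrow> c \<sigma> = 0}"

definition nerve_delta :: "('o, 'a, 'z) cat_scheme \<Rightarrow> nat \<Rightarrow> (('o, 'a) str \<Rightarrow> int) \<Rightarrow> (('o, 'a) str \<Rightarrow> int)" where
  "nerve_delta C n c = (\<lambda>\<sigma>. if \<sigma> \<in> nondeg_strings C (Suc n)
      then \<Sum>i\<le>Suc n. (-1) ^ i * c (face_str C i \<sigma>) else 0)"

definition nerve_cocycles :: "('o, 'a, 'z) cat_scheme \<Rightarrow> nat \<Rightarrow> (('o, 'a) str \<Rightarrow> int) set" where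
  "nerve_cocycles C n = {c \<in> nerve_cochains C n. nerve_delta C n c = (\<lambda>_. 0)}"

definition nerve_coboundaries :: "('o, 'a, 'z) cat_scheme \<Rightarrow> nat \<Rightarrow> (('o, 'a) str \<Rightarrow> int) set" where
  "nerve_coboundaries C n =
     (if n = 0 then {\<lambda>_. 0} else nerve_delta C (n - 1) ` nerve_cochains C (n - 1))"

definition dim_cochain :: "('o, 'a, 'z) cat_scheme \<Rightarrow> nat \<Rightarrow> ((('o, 'a) str, ('o, 'a) lad, 'k) module \<Rightarrow> int)
                           \<Rightarrow> (('o, 'a) str \<Rightarrow> int)" where
  "dim_cochain C n x = (\<lambda>\<sigma>. if \<sigma> \<in> nondeg_strings C n
      then \<Sum>M\<in>{M. x M \<noteq> 0}. x M * int (fst M \<sigma>) else 0)"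

definition comparison_epi :: "'k::field itself \<Rightarrow> ('o, 'a, 'z) cat_scheme \<Rightarrow> nat \<Rightarrow> bool" where
  "comparison_epi K C n \<longleftrightarrow>
     (\<forall>c\<in>nerve_cocycles C n. \<exists>x\<in>gr_cocycles K C (G_cat C) n.
        (\<lambda>\<sigma>. dim_cochain C n x \<sigma> - c \<sigma>) \<in> nerve_coboundaries C n)"

definition comparison_mono :: "'k::field itself \<Rightarrow> ('o, 'a, 'z) cat_scheme \<Rightarrow> nat \<Rightarrow> bool" where
  "comparison_mono K C n \<longleftrightarrow>
     (\<forall>x\<in>gr_cocycles K C (G_cat C) n.
        dim_cochain C n x \<in> nerve_coboundaries C n \<longrightarrow> x \<in> gr_coboundaries K C (G_cat C) n)"

end

(*
  A non-degenerate n-string is a chain of n composable non-identities; in a direct category it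
  refines to a chain of irreducibles, so there are none for n > N.  Hence E_n and G_n are empty and
  their split Grothendieck groups vanish.

  In G_n a composite of ladders is an identity only if both factors are, so every string sigma
  carries a simple module S_sigma (k at sigma, zero elsewhere and on non-identity ladders).  The
  pullback of S_sigma along the face d_i is the semisimple module with dimension vector
  tau |-> [d_i tau = sigma], so c |-> sum c(sigma) [S_sigma] is a cochain map from normalized nerve
  cochains to Gr(kG), split by the dimension map: this gives surjectivity for n >= 1.  If 2n > N, a
  non-identity ladder x_0 -> ... -> x_n -> y_0 -> ... -> y_n would contain at least 2n composable
  non-identities, so G_n is discrete, Gr(kG_n) is free on the [S_sigma], and a class is determined by
  its dimension cochain: this gives injectivity.
*)
theory Submission
  imports Defs
begin

section \<open>Composable chains in a direct category\<close>

lemma composable_Nil [simp]: "composable C []"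
  and composable_single [simp]: "composable C [a]"
  by (simp_all add: composable_def)

lemma composable_Cons_Cons [simp]:
  "composable C (a # b # ms) \<longleftrightarrow> Cod C a = Dom C b \<and> composable C (b # ms)"
  by (auto simp: composable_def less_Suc_eq_0_disj)

lemma composable_Cons:
  "composable C (a # ms) \<longleftrightarrow> (ms \<noteq> [] \<longrightarrow> Cod C a = Dom C (hd ms)) \<and> composable C ms"
  by (cases ms) auto

lemma composable_append:
  "composable C (xs @ ys) \<longleftrightarrow> composable C xs \<and> composable C ys \<and>
     (xs \<noteq> [] \<longrightarrow> ys \<noteq> [] \<longrightarrow> Cod C (last xs) = Dom C (hd ys))"
  by (induction xs rule: induct_list012) (auto simp: composable_Cons)

lemma composable_take: "composable C ms \<Longrightarrow> composable C (take k ms)"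
  and composable_drop: "composable C ms \<Longrightarrow> composable C (drop k ms)"
  by (metis append_take_drop_id composable_append)+

lemma nondeg_stringsD:
  assumes "s \<in> nondeg_strings C n"
  shows "fst s \<in> Ob C" "length (snd s) = n" "set (snd s) \<subseteq> Ar C" "composable C (snd s)"
    "0 < n \<Longrightarrow> Dom C (hd (snd s)) = fst s" "\<forall>u\<in>set (snd s). non_id C u"
  using assms unfolding nondeg_strings_def is_string_def non_id_def by auto

lemma obj_at_0 [simp]: "obj_at C s 0 = fst s"
  and obj_at_Suc [simp]: "obj_at C s (Suc j) = Cod C (snd s ! j)"
  by (simp_all add: obj_at_def)

lemma Dom_nth_nondeg_string:
  assumes "s \<in> nondeg_strings C n" "j < n"
  shows "Dom C (snd s ! j) = obj_at C s j"
  using nondeg_stringsD[OF assms(1)] assms(2)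
  by (cases j) (auto simp: hd_conv_nth composable_def)

lemma obj_at_last_nondeg_string:
  assumes "s \<in> nondeg_strings C n" "0 < n"
  shows "obj_at C s n = Cod C (last (snd s))"
proof -
  have "snd s \<noteq> []" "length (snd s) = n" using nondeg_stringsD(2)[OF assms(1)] assms(2) by auto
  then show ?thesis using assms(2) by (cases n) (auto simp: last_conv_nth)
qed

locale direct_category =
  fixes C :: "('o, 'a) cat"
  assumes is_cat: "is_cat C" and finite_cat: "finite_cat C" and direct: "direct C"
begin

lemma Dom_in_Ob: "a \<in> Ar C \<Longrightarrow> Dom C a \<in> Ob C"
  and Cod_in_Ob: "a \<in> Ar C \<Longrightarrow> Cod C a \<in> Ob C"
  and Idm_in_Ar: "x \<in> Ob C \<Longrightarrow> Idm C x \<in> Ar C"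
  and Dom_Idm [simp]: "x \<in> Ob C \<Longrightarrow> Dom C (Idm C x) = x"
  and Cod_Idm [simp]: "x \<in> Ob C \<Longrightarrow> Cod C (Idm C x) = x"
  and Comp_in_Ar: "f \<in> Ar C \<Longrightarrow> g \<in> Ar C \<Longrightarrow> Cod C f = Dom C g \<Longrightarrow> Comp C g f \<in> Ar C"
  and Dom_Comp [simp]: "f \<in> Ar C \<Longrightarrow> g \<in> Ar C \<Longrightarrow> Cod C f = Dom C g \<Longrightarrow> Dom C (Comp C g f) = Dom C f"
  and Cod_Comp [simp]: "f \<in> Ar C \<Longrightarrow> g \<in> Ar C \<Longrightarrow> Cod C f = Dom C g \<Longrightarrow> Cod C (Comp C g f) = Cod C g"
  and Comp_Idm_left: "f \<in> Ar C \<Longrightarrow> Comp C (Idm C (Cod C f)) f = f"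
  and Comp_Idm_right: "f \<in> Ar C \<Longrightarrow> Comp C f (Idm C (Dom C f)) = f"
  using is_cat unfolding is_cat_def by blast+

lemma no_nonid_cycle:
  assumes "ms \<noteq> []" "\<forall>m\<in>set ms. non_id C m" "composable C ms" "Cod C (last ms) = Dom C (hd ms)"
  shows False
  using direct assms unfolding direct_def by blast

lemma non_id_Comp:
  assumes f: "f \<in> Ar C" and g: "g \<in> Ar C" and fg: "Cod C f = Dom C g"
    and "non_id C f \<or> non_id C g"
  shows "non_id C (Comp C g f)"
proof (rule ccontr)
  assume "\<not> non_id C (Comp C g f)"
  then have gf: "Comp C g f = Idm C (Dom C f)"
    using Comp_in_Ar[OF f g fg] f g fg unfolding non_id_def by simp
  then have cycle: "Cod C g = Dom C f"
    using Cod_Comp[OF f g fg] Dom_in_Ob[OF f] by simp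
  consider (f_id) "\<not> non_id C f" | (g_id) "\<not> non_id C g" | (both) "non_id C f" "non_id C g"
    by blast
  then show False
  proof cases
    case f_id
    then have "f = Idm C (Dom C f)" using f unfolding non_id_def by simp
    then have "Dom C f = Dom C g" "Comp C g f = g"
      using fg Cod_Idm[OF Dom_in_Ob[OF f]] Comp_Idm_right[OF g] by metis+
    then show False using gf f_id assms(4) unfolding non_id_def by simp
  next
    case g_id
    then have "Comp C g f = f" using g fg Comp_Idm_left[OF f] unfolding non_id_def by simp
    then show False using gf g_id assms(4) unfolding non_id_def by simp
  next
    case both
    then show False using no_nonid_cycle[of "[f, g]"] fg cycle by simp
  qed
qed

lemma nonid_chain_distinct:
  assumes ms: "composable C ms" "\<forall>m\<in>set ms. non_id C m"
  shows "distinct ms"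
proof (rule ccontr)
  assume "\<not> distinct ms"
  then obtain i j where ij: "i < j" "j < length ms" "ms ! i = ms ! j"
    by (metis distinct_conv_nth linorder_neqE_nat)
  define cs where "cs = take (j - i) (drop i ms)"
  have "cs \<noteq> []" "hd cs = ms ! i" "last cs = ms ! (j - 1)"
    using ij by (auto simp: cs_def hd_drop_conv_nth last_conv_nth min_def)
  moreover have "composable C cs" "\<forall>m\<in>set cs. non_id C m"
    using ms by (auto simp: cs_def composable_take composable_drop dest: in_set_takeD in_set_dropD)
  moreover have "Cod C (ms ! (j - 1)) = Dom C (ms ! j)"
  proof -
    have "Suc (j - 1) = j" using ij by simp
    then show ?thesis using ms(1) ij(2) unfolding composable_def by metis
  qed
  ultimately show False using no_nonid_cycle[of cs] ij(3) by simp
qed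

lemma nonid_chain_length_le_card:
  assumes "composable C ms" "\<forall>m\<in>set ms. non_id C m"
  shows "length ms \<le> card (Ar C)"
proof -
  have "set ms \<subseteq> Ar C" using assms(2) unfolding non_id_def by blast
  then have "card (set ms) \<le> card (Ar C)"
    using finite_cat unfolding finite_cat_def by (simp add: card_mono)
  then show ?thesis using distinct_card[OF nonid_chain_distinct[OF assms]] by simp
qed

lemma nonid_chain_split:
  assumes ms: "composable C ms" "\<forall>m\<in>set ms. non_id C m" and k: "k < length ms"
    and fg: "f \<in> Ar C" "g \<in> Ar C" "Cod C f = Dom C g" "Comp C g f = ms ! k"
      "f \<noteq> Idm C (Dom C f)" "g \<noteq> Idm C (Dom C g)"
  defines "ms' \<equiv> take k ms @ [f, g] @ drop (Suc k) ms"
  shows "composable C ms'" "\<forall>m\<in>set ms'. non_id C m" "length ms' = Suc (length ms)"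
proof -
  have "composable C (take k ms @ [ms ! k] @ drop (Suc k) ms)"
    using ms(1) k by (simp add: id_take_nth_drop[symmetric])
  moreover have "Dom C (ms ! k) = Dom C f" "Cod C (ms ! k) = Cod C g"
    using Dom_Comp[OF fg(1-3)] Cod_Comp[OF fg(1-3)] fg(4) by simp_all
  ultimately show "composable C ms'"
    unfolding ms'_def using fg(3) by (simp add: composable_append composable_Cons)
  show "\<forall>m\<in>set ms'. non_id C m"
    using ms(2) fg unfolding ms'_def non_id_def by (auto dest: in_set_takeD in_set_dropD)
  show "length ms' = Suc (length ms)" using k unfolding ms'_def by simp
qed

lemma nonid_chain_refines_to_irr_chain:
  assumes "composable C ms" "\<forall>m\<in>set ms. non_id C m"
  shows "\<exists>ns. irr_chain C ns \<and> length ms \<le> length ns"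
  using assms
proof (induction "card (Ar C) - length ms" arbitrary: ms rule: less_induct)
  case less
  show ?case
  proof (cases "\<forall>m\<in>set ms. irreducible C m")
    case True
    then show ?thesis using less.prems unfolding irr_chain_def by blast
  next
    case False
    then obtain k where k: "k < length ms" "\<not> irreducible C (ms ! k)"
      by (metis in_set_conv_nth)
    moreover have "non_id C (ms ! k)" using less.prems k by auto
    ultimately obtain f g where fg: "f \<in> Ar C" "g \<in> Ar C" "Cod C f = Dom C g" "Comp C g f = ms ! k"
      "f \<noteq> Idm C (Dom C f)" "g \<noteq> Idm C (Dom C g)"
      unfolding irreducible_def by blast
    note split = nonid_chain_split[OF less.prems k(1) fg]
    have "card (Ar C) - length (take k ms @ [f, g] @ drop (Suc k) ms) < card (Ar C) - length ms"
      using nonid_chain_length_le_card[OF split(1,2)] split(3) by simp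
    then obtain ns where "irr_chain C ns" "Suc (length ms) \<le> length ns"
      using less.hyps split by metis
    then show ?thesis by auto
  qed
qed

lemma nonid_chain_length_le_comp_length:
  assumes "composable C ms" "\<forall>m\<in>set ms. non_id C m"
  shows "length ms \<le> comp_length C"
proof -
  obtain ns where ns: "irr_chain C ns" "length ms \<le> length ns"
    using nonid_chain_refines_to_irr_chain[OF assms] by blast
  have "\<And>ms. irr_chain C ms \<Longrightarrow> length ms \<le> card (Ar C)"
    using nonid_chain_length_le_card unfolding irr_chain_def irreducible_def by blast
  then have "{length ms | ms. irr_chain C ms} \<subseteq> {..card (Ar C)}" by auto
  then have "finite {length ms | ms. irr_chain C ms}" by (rule finite_subset) simp
  then have "length ns \<le> comp_length C"
    unfolding comp_length_def using ns(1) by (intro Max_ge) auto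
  then show ?thesis using ns(2) by simp
qed

lemma obj_at_in_Ob:
  assumes "s \<in> nondeg_strings C n" "j \<le> n"
  shows "obj_at C s j \<in> Ob C"
  using assms Cod_in_Ob
  by (cases j) (auto simp: nondeg_strings_def is_string_def obj_at_def)

lemma nondeg_strings_empty:
  assumes "comp_length C < n"
  shows "nondeg_strings C n = {}"
  using nonid_chain_length_le_comp_length assms nondeg_stringsD(2,4,6) by fastforce

lemma finite_nondeg_strings: "finite (nondeg_strings C n)"
proof -
  have "nondeg_strings C n \<subseteq> Ob C \<times> {us. set us \<subseteq> Ar C \<and> length us = n}"
    using nondeg_stringsD(1-3) by fastforce
  then show ?thesis
    using finite_cat unfolding finite_cat_def by (auto intro: finite_subset simp: finite_lists_length_eq)
qed

lemma fold_Comp: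
  assumes "m \<in> Ar C" "set ms \<subseteq> Ar C" "composable C (m # ms)"
  shows "fold (\<lambda>g acc. Comp C g acc) ms m \<in> Ar C \<and>
    Dom C (fold (\<lambda>g acc. Comp C g acc) ms m) = Dom C m \<and>
    Cod C (fold (\<lambda>g acc. Comp C g acc) ms m) = Cod C (last (m # ms)) \<and>
    (non_id C m \<or> (\<exists>e\<in>set ms. non_id C e) \<longrightarrow> non_id C (fold (\<lambda>g acc. Comp C g acc) ms m))"
  using assms
proof (induction ms arbitrary: m)
  case Nil
  then show ?case by simp
next
  case (Cons g ms)
  then have g: "g \<in> Ar C" "Cod C m = Dom C g" by auto
  then have "Comp C g m \<in> Ar C" "composable C (Comp C g m # ms)"
    using Cons.prems Comp_in_Ar by (auto simp: composable_Cons)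
  moreover have "non_id C m \<or> non_id C g \<Longrightarrow> non_id C (Comp C g m)"
    using non_id_Comp Cons.prems(1) g by blast
  ultimately show ?case
    using Cons.IH[of "Comp C g m"] Cons.prems(1,2) g by (cases ms) auto
qed

lemma
  assumes "ms \<noteq> []" "set ms \<subseteq> Ar C" "composable C ms"
  shows path_comp_in_Ar: "path_comp C ms \<in> Ar C"
    and Dom_path_comp: "Dom C (path_comp C ms) = Dom C (hd ms)"
    and Cod_path_comp: "Cod C (path_comp C ms) = Cod C (last ms)"
    and non_id_path_comp: "\<exists>e\<in>set ms. non_id C e \<Longrightarrow> non_id C (path_comp C ms)"
  using assms fold_Comp[of "hd ms" "tl ms"] by (cases ms; auto)+

end

section \<open>Ladders and the categories \<open>G_n\<close>\<close>

lemma G_cat_simps [simp]: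
  "Ob (G_cat C n) = nondeg_strings C n" "Dom (G_cat C n) = fst" "Cod (G_cat C n) = (\<lambda>l. fst (snd l))"
  "Idm (G_cat C n) = id_ladder C" "Comp (G_cat C n) = comp_ladder C"
  by (simp_all add: G_cat_def)

lemma id_ladder_simps [simp]:
  "fst (id_ladder C s) = s" "fst (snd (id_ladder C s)) = s"
  "snd (snd (id_ladder C s)) = map (\<lambda>i. Idm C (obj_at C s i)) [0..<Suc (length (snd s))]"
  by (simp_all add: id_ladder_def)

lemma comp_ladder_simps [simp]:
  "fst (comp_ladder C g f) = fst f" "fst (snd (comp_ladder C g f)) = fst (snd g)"
  "snd (snd (comp_ladder C g f)) = map2 (Comp C) (snd (snd g)) (snd (snd f))"
  by (simp_all add: comp_ladder_def)

text \<open>The arrows \<open>x\<^sub>j \<rightarrow> \<dots> \<rightarrow> x\<^sub>n \<rightarrow> y\<^sub>0 \<rightarrow> \<dots> \<rightarrow> y\<^sub>j\<close>, whose composite is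
  the \<open>j\<close>-th rung of \<open>w_ladder C s t w\<close>.\<close>
definition rung_path :: "('o, 'a) str \<Rightarrow> ('o, 'a) str \<Rightarrow> 'a \<Rightarrow> nat \<Rightarrow> 'a list" where
  "rung_path s t w j = drop j (snd s) @ [w] @ take j (snd t)"

lemma w_ladder_simps [simp]:
  "fst (w_ladder C s t w) = s" "fst (snd (w_ladder C s t w)) = t"
  "snd (snd (w_ladder C s t w)) = map (\<lambda>j. path_comp C (rung_path s t w j)) [0..<Suc (length (snd s))]"
  by (simp_all add: w_ladder_def rung_path_def)

definition ladder_frame :: "('o, 'a, 'z) cat_scheme \<Rightarrow> nat \<Rightarrow> ('o, 'a) lad \<Rightarrow> bool" where
  "ladder_frame C n l \<longleftrightarrow> length (snd (snd l)) = Suc n \<and>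
     (\<forall>j\<le>n. snd (snd l) ! j \<in> Ar C \<and> Dom C (snd (snd l) ! j) = obj_at C (fst l) j \<and>
             Cod C (snd (snd l) ! j) = obj_at C (fst (snd l)) j)"

definition nonid_rungs :: "('o, 'a, 'z) cat_scheme \<Rightarrow> nat \<Rightarrow> ('o, 'a) lad \<Rightarrow> bool" where
  "nonid_rungs C n l \<longleftrightarrow> length (snd (snd l)) = Suc n \<and> (\<forall>j\<le>n. non_id C (snd (snd l) ! j))"

context direct_category
begin

lemma rung_path:
  assumes s: "s \<in> nondeg_strings C n" and t: "t \<in> nondeg_strings C n"
    and w: "w \<in> Ar C" "Dom C w = obj_at C s n" "Cod C w = obj_at C t 0" and j: "j \<le> n"
  shows rung_path_not_Nil: "rung_path s t w j \<noteq> []"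
    and set_rung_path: "set (rung_path s t w j) \<subseteq> Ar C"
    and composable_rung_path: "composable C (rung_path s t w j)"
    and Dom_hd_rung_path: "Dom C (hd (rung_path s t w j)) = obj_at C s j"
    and Cod_last_rung_path: "Cod C (last (rung_path s t w j)) = obj_at C t j"
proof -
  note s' = nondeg_stringsD[OF s] and t' = nondeg_stringsD[OF t]
  show "rung_path s t w j \<noteq> []" unfolding rung_path_def by simp
  show "set (rung_path s t w j) \<subseteq> Ar C"
    unfolding rung_path_def using s'(3) t'(3) w(1) by (auto dest: in_set_dropD in_set_takeD)
  have "drop j (snd s) \<noteq> [] \<Longrightarrow> Cod C (last (drop j (snd s))) = Dom C w"
    using s'(2) w(2) obj_at_last_nondeg_string[OF s] by (cases n) auto
  moreover have "take j (snd t) \<noteq> [] \<Longrightarrow> Cod C w = Dom C (hd (take j (snd t)))"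
    using t'(2,5) w(3) by (auto simp: hd_take)
  ultimately show "composable C (rung_path s t w j)"
    unfolding rung_path_def composable_append
    using composable_drop[OF s'(4)] composable_take[OF t'(4)] by (simp add: composable_Cons)
  show "Dom C (hd (rung_path s t w j)) = obj_at C s j"
  proof (cases "j < n")
    case True
    then show ?thesis
      using Dom_nth_nondeg_string[OF s True] s'(2) by (simp add: rung_path_def hd_drop_conv_nth)
  next
    case False
    then show ?thesis using j s'(2) w(2) by (simp add: rung_path_def)
  qed
  show "Cod C (last (rung_path s t w j)) = obj_at C t j"
  proof (cases j)
    case 0
    then show ?thesis using w(3) by (simp add: rung_path_def)
  next
    case (Suc k)
    then have "take j (snd t) \<noteq> []" "last (take j (snd t)) = snd t ! k"
      using t'(2) j by (auto simp: take_Suc_conv_app_nth)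
    then show ?thesis using Suc by (simp add: rung_path_def)
  qed
qed

lemma rung_path_non_id:
  assumes s: "s \<in> nondeg_strings C n" and t: "t \<in> nondeg_strings C n"
    and j: "j \<le> n" and "0 < n \<or> non_id C w"
  shows "\<exists>e\<in>set (rung_path s t w j). non_id C e"
proof (cases "j < n")
  case True
  then have "snd s ! j \<in> set (drop j (snd s))"
    using nondeg_stringsD(2)[OF s] by (metis Cons_nth_drop_Suc list.set_intros(1))
  then show ?thesis
    using nondeg_stringsD(6)[OF s] by (auto simp: rung_path_def dest: in_set_dropD)
next
  case False
  then have "0 < n \<Longrightarrow> snd t ! 0 \<in> set (rung_path s t w j)" "0 < n \<Longrightarrow> snd t ! 0 \<in> set (snd t)"
    using j nondeg_stringsD(2)[OF t] by (simp_all add: rung_path_def)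
  then show ?thesis using nondeg_stringsD(6)[OF t] assms(4) by (auto simp: rung_path_def)
qed

lemma ladder_frame_id_ladder:
  assumes "s \<in> nondeg_strings C n"
  shows "ladder_frame C n (id_ladder C s)"
  using nondeg_stringsD(2)[OF assms] obj_at_in_Ob[OF assms]
  by (auto simp: ladder_frame_def nth_map_upt Idm_in_Ar simp del: upt_Suc)

lemma not_nonid_rungs_id_ladder:
  assumes "fst s \<in> Ob C"
  shows "\<not> nonid_rungs C n (id_ladder C s)"
  using assms by (auto simp: nonid_rungs_def non_id_def nth_Cons' simp del: upt_Suc)

lemma comp_ladder_id_ladder:
  assumes "s \<in> nondeg_strings C n"
  shows "comp_ladder C (id_ladder C s) (id_ladder C s) = id_ladder C s"
proof -
  have "Comp C (Idm C (obj_at C s i)) (Idm C (obj_at C s i)) = Idm C (obj_at C s i)"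
    if "i \<in> set [0..<Suc (length (snd s))]" for i
  proof -
    have "obj_at C s i \<in> Ob C" using that obj_at_in_Ob[OF assms] nondeg_stringsD(2)[OF assms] by auto
    then show ?thesis using Comp_Idm_left[OF Idm_in_Ar] by (metis Cod_Idm)
  qed
  then show ?thesis
    by (simp add: comp_ladder_def id_ladder_def zip_map_map zip_same_conv_map del: upt_Suc)
qed

lemma nonid_rungs_comp_ladder:
  assumes "ladder_frame C n f" "ladder_frame C n g" "fst (snd f) = fst g"
    and "nonid_rungs C n f \<or> nonid_rungs C n g"
  shows "nonid_rungs C n (comp_ladder C g f)"
  using assms non_id_Comp by (auto simp: ladder_frame_def nonid_rungs_def)

lemma G_arrowD:
  assumes "l \<in> Ar (G_cat C n)"
  shows "fst l \<in> nondeg_strings C n" "fst (snd l) \<in> nondeg_strings C n" "ladder_frame C n l"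
    "l = id_ladder C (fst l) \<or> nonid_rungs C n l"
proof -
  consider (id) s where "s \<in> nondeg_strings C n" "l = id_ladder C s"
    | (w) s t w where "s \<in> nondeg_strings C n" "t \<in> nondeg_strings C n" "w \<in> Ar C"
        "Dom C w = obj_at C s n" "Cod C w = obj_at C t 0" "l = w_ladder C s t w"
    using assms by (auto simp: G_cat_def)
  then have "fst l \<in> nondeg_strings C n \<and> fst (snd l) \<in> nondeg_strings C n \<and> ladder_frame C n l \<and>
    (l = id_ladder C (fst l) \<or> nonid_rungs C n l)"
  proof cases
    case id
    then show ?thesis using ladder_frame_id_ladder by simp
  next
    case w
    note path = rung_path[OF w(1-5)] rung_path_non_id[OF w(1,2)]
    have len: "length (snd s) = n" using nondeg_stringsD(2)[OF w(1)] .
    have "ladder_frame C n l"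
      unfolding ladder_frame_def w(6) using len path_comp_in_Ar Dom_path_comp Cod_path_comp path
      by (simp add: nth_map_upt del: upt_Suc)
    moreover have "l = id_ladder C (fst l) \<or> nonid_rungs C n l"
    proof (cases "0 < n \<or> non_id C w")
      case True
      then have "nonid_rungs C n l"
        unfolding nonid_rungs_def w(6) using len non_id_path_comp path
        by (simp add: nth_map_upt del: upt_Suc)
      then show ?thesis ..
    next
      case False
      then have "n = 0" "w = Idm C (Dom C w)" using w(3) unfolding non_id_def by auto
      moreover have "snd s = []" "snd t = []" using \<open>n = 0\<close> len nondeg_stringsD(2)[OF w(2)] by auto
      ultimately have "s = t" "l = id_ladder C s"
        using w Cod_Idm[OF Dom_in_Ob[OF w(3)]]
        by (auto simp: prod_eq_iff w_ladder_def id_ladder_def rung_path_def)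
      then show ?thesis by simp
    qed
    ultimately show ?thesis using w by simp
  qed
  then show "fst l \<in> nondeg_strings C n" "fst (snd l) \<in> nondeg_strings C n" "ladder_frame C n l"
    "l = id_ladder C (fst l) \<or> nonid_rungs C n l" by simp_all
qed

lemma
  assumes f: "f \<in> Ar (G_cat C n)" and g: "g \<in> Ar (G_cat C n)" and fg: "fst (snd f) = fst g"
  shows G_comp_id_ladders:
      "f = id_ladder C (fst f) \<Longrightarrow> g = id_ladder C (fst g) \<Longrightarrow> comp_ladder C g f = id_ladder C (fst f)"
    and nonid_rungs_G_comp:
      "\<not> (f = id_ladder C (fst f) \<and> g = id_ladder C (fst g)) \<Longrightarrow> nonid_rungs C n (comp_ladder C g f)"
proof -
  note f' = G_arrowD[OF f] and g' = G_arrowD[OF g]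
  show "comp_ladder C g f = id_ladder C (fst f)"
    if "f = id_ladder C (fst f)" "g = id_ladder C (fst g)"
    using comp_ladder_id_ladder[OF f'(1)] that fg by (metis id_ladder_simps(2))
  show "nonid_rungs C n (comp_ladder C g f)" if "\<not> (f = id_ladder C (fst f) \<and> g = id_ladder C (fst g))"
    using nonid_rungs_comp_ladder f'(3,4) g'(3,4) fg that by blast
qed

lemma G_comp_eq_id_iff:
  assumes f: "f \<in> Ar (G_cat C n)" and g: "g \<in> Ar (G_cat C n)" and fg: "fst (snd f) = fst g"
  shows "comp_ladder C g f = id_ladder C (fst f) \<longleftrightarrow> f = id_ladder C (fst f) \<and> g = id_ladder C (fst g)"
  using G_comp_id_ladders[OF assms] nonid_rungs_G_comp[OF assms]
    not_nonid_rungs_id_ladder nondeg_stringsD(1)[OF G_arrowD(1)[OF f]] by metis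

lemma G_discrete:
  assumes n: "comp_length C < 2 * n" and l: "l \<in> Ar (G_cat C n)"
  shows "l = id_ladder C (fst l)"
proof (rule ccontr)
  assume "l \<noteq> id_ladder C (fst l)"
  then obtain s t w where s: "s \<in> nondeg_strings C n" and t: "t \<in> nondeg_strings C n"
    and w: "w \<in> Ar C" "Dom C w = obj_at C s n" "Cod C w = obj_at C t 0"
    using l by (auto simp: G_cat_def)
  note s' = nondeg_stringsD[OF s] and t' = nondeg_stringsD[OF t]
  have "0 < n" using n by simp
  define ms where "ms = snd s @ (if non_id C w then [w] else []) @ snd t"
  have "\<not> non_id C w \<Longrightarrow> Cod C w = Dom C w"
    using w(1) Cod_Idm[OF Dom_in_Ob[OF w(1)]] unfolding non_id_def by metis
  moreover have "snd s \<noteq> []" "snd t \<noteq> []" using s'(2) t'(2) \<open>0 < n\<close> by auto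
  moreover have "Cod C (last (snd s)) = Dom C w" "Cod C w = Dom C (hd (snd t))"
    using obj_at_last_nondeg_string[OF s \<open>0 < n\<close>] w(2,3) t'(5) \<open>0 < n\<close> by simp_all
  ultimately have "composable C ms"
    unfolding ms_def composable_append using s'(4) t'(4) by (auto simp: composable_Cons)
  moreover have "\<forall>m\<in>set ms. non_id C m" unfolding ms_def using s'(6) t'(6) by auto
  ultimately have "length ms \<le> comp_length C" by (rule nonid_chain_length_le_comp_length)
  moreover have "2 * n \<le> length ms" unfolding ms_def using s'(2) t'(2) by simp
  ultimately show False using n by simp
qed

end

lemma nth_take_drop_Suc:
  assumes "j < length xs - 1"
  shows "(take i xs @ drop (Suc i) xs) ! j = xs ! (if j < i then j else Suc j)"
  using assms by (auto simp: nth_append min_def)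

lemma face_lad_simps [simp]:
  "fst (face_lad C i l) = face_str C i (fst l)" "fst (snd (face_lad C i l)) = face_str C i (fst (snd l))"
  "snd (snd (face_lad C i l)) = take i (snd (snd l)) @ drop (Suc i) (snd (snd l))"
  by (simp_all add: face_lad_def split: prod.splits)

context direct_category
begin

lemma
  assumes \<tau>: "\<tau> \<in> nondeg_strings C (Suc m)" and i: "i \<le> Suc m"
  shows length_face_str: "length (snd (face_str C i \<tau>)) = m"
    and obj_at_face_str:
      "j \<le> m \<Longrightarrow> obj_at C (face_str C i \<tau>) j = obj_at C \<tau> (if j < i then j else Suc j)"
proof -
  obtain x0 us where \<tau>_eq: "\<tau> = (x0, us)" by force
  note \<tau>' = nondeg_stringsD[OF \<tau>, unfolded \<tau>_eq, simplified]
  consider "i = 0" | "i = Suc m" | "0 < i" "i < Suc m" using i by linarith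
  then have "length (snd (face_str C i \<tau>)) = m \<and>
    (j \<le> m \<longrightarrow> obj_at C (face_str C i \<tau>) j = obj_at C \<tau> (if j < i then j else Suc j))"
  proof cases
    case 1
    moreover have "us \<noteq> []" using \<tau>' by auto
    ultimately show ?thesis using \<tau>' by (cases j) (auto simp: face_str_def \<tau>_eq hd_conv_nth nth_tl)
  next
    case 2
    then show ?thesis using \<tau>' by (cases j) (auto simp: face_str_def \<tau>_eq nth_butlast)
  next
    case 3
    have "us ! (i - 1) \<in> Ar C" "us ! i \<in> Ar C" "Cod C (us ! (i - 1)) = Dom C (us ! i)"
      using \<tau>' 3 unfolding composable_def by (auto simp: subset_code(1))
    then have "Cod C (Comp C (us ! i) (us ! (i - 1))) = Cod C (us ! i)" by simp
    then show ?thesis using \<tau>' 3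
      by (cases j) (auto simp: face_str_def \<tau>_eq nth_append nth_Cons' min_def)
  qed
  then show "length (snd (face_str C i \<tau>)) = m"
    "j \<le> m \<Longrightarrow> obj_at C (face_str C i \<tau>) j = obj_at C \<tau> (if j < i then j else Suc j)"
    by simp_all
qed

lemma fst_face_str_in_Ob:
  assumes "\<tau> \<in> nondeg_strings C (Suc m)" "i \<le> Suc m"
  shows "fst (face_str C i \<tau>) \<in> Ob C"
proof -
  have "fst (face_str C i \<tau>) = obj_at C \<tau> (if 0 < i then 0 else Suc 0)"
    using obj_at_face_str[OF assms, of 0] by simp
  then show ?thesis using obj_at_in_Ob[OF assms(1), of "if 0 < i then 0 else Suc 0"] by simp
qed

lemma face_lad_id_ladder:
  assumes \<tau>: "\<tau> \<in> nondeg_strings C (Suc m)" and i: "i \<le> Suc m"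
  shows "face_lad C i (id_ladder C \<tau>) = id_ladder C (face_str C i \<tau>)"
proof -
  define rs where "rs = map (\<lambda>j. Idm C (obj_at C \<tau> j)) [0..<Suc (Suc m)]"
  have "take i rs @ drop (Suc i) rs = map (\<lambda>j. Idm C (obj_at C (face_str C i \<tau>) j)) [0..<Suc m]"
  proof (rule nth_equalityI)
    show "length (take i rs @ drop (Suc i) rs) = length (map (\<lambda>j. Idm C (obj_at C (face_str C i \<tau>) j)) [0..<Suc m])"
      using i by (simp add: rs_def)
    fix j assume "j < length (take i rs @ drop (Suc i) rs)"
    then have j: "j < Suc m" using i by (simp add: rs_def)
    have "(take i rs @ drop (Suc i) rs) ! j = Idm C (obj_at C \<tau> (if j < i then j else Suc j))"
      using j by (simp add: nth_take_drop_Suc rs_def nth_map_upt del: upt_Suc)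
    then show "(take i rs @ drop (Suc i) rs) ! j = map (\<lambda>j. Idm C (obj_at C (face_str C i \<tau>) j)) [0..<Suc m] ! j"
      using j obj_at_face_str[OF \<tau> i, of j] by (simp add: nth_map_upt del: upt_Suc)
  qed
  then show ?thesis
    using nondeg_stringsD(2)[OF \<tau>] length_face_str[OF \<tau> i]
    by (simp add: rs_def prod_eq_iff del: upt_Suc)
qed

lemma nonid_rungs_face_lad:
  assumes "nonid_rungs C (Suc m) l" "i \<le> Suc m"
  shows "nonid_rungs C m (face_lad C i l)"
  using assms by (auto simp: nonid_rungs_def nth_take_drop_Suc)

end

section \<open>Split Grothendieck groups of identity-reflecting categories\<close>

lemma zspan_generator: "s \<in> S \<Longrightarrow> s \<in> zspan S"
  using zspan_add[OF zspan_zero] by fastforce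

lemma zspan_add_closed:
  assumes "x \<in> zspan S" "y \<in> zspan S"
  shows "(\<lambda>b. x b + y b) \<in> zspan S"
  using assms(2,1)
proof (induction y rule: zspan.induct)
  case zspan_zero
  then show ?case by simp
next
  case (zspan_add y s)
  then show ?case using zspan.zspan_add[of "\<lambda>b. x b + y b"] by (simp add: add.assoc)
next
  case (zspan_diff y s)
  then show ?case using zspan.zspan_diff[of "\<lambda>b. x b + y b"] by (simp add: add_diff_eq)
qed

lemma zspan_uminus_closed:
  assumes "x \<in> zspan S"
  shows "(\<lambda>b. - x b) \<in> zspan S"
  using assms
proof (induction x rule: zspan.induct)
  case zspan_zero
  then show ?case by (simp add: zspan.zspan_zero)
next
  case (zspan_add x s)
  then show ?case using zspan.zspan_diff[of "\<lambda>b. - x b"] by simp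
next
  case (zspan_diff x s)
  then show ?case using zspan.zspan_add[of "\<lambda>b. - x b"] by simp
qed

lemma zspan_diff_closed: "x \<in> zspan S \<Longrightarrow> y \<in> zspan S \<Longrightarrow> (\<lambda>b. x b - y b) \<in> zspan S"
  using zspan_add_closed[OF _ zspan_uminus_closed] by fastforce

lemma zspan_mult_closed:
  assumes "x \<in> zspan S"
  shows "(\<lambda>b. c * x b) \<in> zspan S"
proof -
  have nat_mult: "(\<lambda>b. int n * x b) \<in> zspan S" for n
  proof (induction n)
    case 0
    then show ?case using zspan.zspan_zero by simp
  next
    case (Suc n)
    have "(\<lambda>b. int (Suc n) * x b) = (\<lambda>b. int n * x b + x b)" by (simp add: algebra_simps)
    then show ?case using zspan_add_closed[OF Suc assms] by simp
  qed
  show ?thesis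
  proof (cases "0 \<le> c")
    case True
    then show ?thesis using nat_mult[of "nat c"] by simp
  next
    case False
    then show ?thesis using zspan_uminus_closed[OF nat_mult[of "nat (- c)"]] by simp
  qed
qed

lemma zspan_sum_closed:
  "(\<And>a. a \<in> A \<Longrightarrow> f a \<in> zspan S) \<Longrightarrow> (\<lambda>b. \<Sum>a\<in>A. f a b) \<in> zspan S"
proof (induction A rule: infinite_finite_induct)
  case (insert a A)
  then show ?case using zspan_add_closed[of "f a" S] by simp
qed (simp_all add: zspan.zspan_zero)

lemma zspan_subset_zspan: "S \<subseteq> zspan T \<Longrightarrow> zspan S \<subseteq> zspan T"
proof
  fix x assume S: "S \<subseteq> zspan T" and "x \<in> zspan S"
  from \<open>x \<in> zspan S\<close> show "x \<in> zspan T"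
    using S by (induction x rule: zspan.induct) (auto intro: zspan.zspan_zero zspan_add_closed zspan_diff_closed)
qed

lemma zspan_gen_support:
  assumes "x \<in> zspan {gen M | M. P M}"
  shows "finite {M. x M \<noteq> 0}" "{M. x M \<noteq> 0} \<subseteq> {M. P M}"
proof -
  from assms have "finite {M. x M \<noteq> 0} \<and> {M. x M \<noteq> 0} \<subseteq> {M. P M}"
  proof (induction x rule: zspan.induct)
    case (zspan_add x s)
    then obtain M where "s = gen M" "P M" by blast
    then have "{N. x N + s N \<noteq> 0} \<subseteq> {N. x N \<noteq> 0} \<union> {M}" by (auto simp: gen_def)
    then show ?case using zspan_add.IH \<open>P M\<close> finite_subset by blast
  next
    case (zspan_diff x s)
    then obtain M where "s = gen M" "P M" by blast
    then have "{N. x N - s N \<noteq> 0} \<subseteq> {N. x N \<noteq> 0} \<union> {M}" by (auto simp: gen_def)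
    then show ?case using zspan_diff.IH \<open>P M\<close> finite_subset by blast
  qed simp
  then show "finite {M. x M \<noteq> 0}" "{M. x M \<noteq> 0} \<subseteq> {M. P M}" by simp_all
qed

definition pairing :: "('b \<Rightarrow> int) \<Rightarrow> ('b \<Rightarrow> int) \<Rightarrow> int" where
  "pairing x h = (\<Sum>M\<in>{M. x M \<noteq> 0}. x M * h M)"

lemma sum_gen_support:
  assumes "finite {M. x M \<noteq> 0}"
  shows "(\<lambda>N. \<Sum>M\<in>{M. x M \<noteq> 0}. x M * gen M N) = x"
proof
  fix N
  have "(\<Sum>M\<in>{M. x M \<noteq> 0}. x M * gen M N) = (\<Sum>M\<in>{M. x M \<noteq> 0}. if M = N then x M else 0)"
    by (rule sum.cong) (auto simp: gen_def)
  then show "(\<Sum>M\<in>{M. x M \<noteq> 0}. x M * gen M N) = x N" using assms by (simp add: sum.delta')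
qed

lemma lin_ext_eq_pairing:
  assumes "finite {M. x M \<noteq> 0}"
  shows "lin_ext g x N = pairing x (\<lambda>M. gen (g M) N)"
proof -
  have "lin_ext g x N = (\<Sum>M\<in>{M \<in> {M. x M \<noteq> 0}. g M = N}. x M)"
    unfolding lin_ext_def by (rule sum.cong) auto
  also have "\<dots> = (\<Sum>M\<in>{M. x M \<noteq> 0}. if g M = N then x M else 0)"
    using assms by (rule sum.inter_filter)
  also have "\<dots> = pairing x (\<lambda>M. gen (g M) N)"
    unfolding pairing_def by (rule sum.cong) (auto simp: gen_def)
  finally show ?thesis .
qed

lemma pairing_comb:
  assumes "finite A"
  shows "pairing (\<lambda>N. \<Sum>a\<in>A. c a * gen (F a) N) h = (\<Sum>a\<in>A. c a * h (F a))"
proof -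
  let ?x = "\<lambda>N. \<Sum>a\<in>A. c a * gen (F a) N"
  have supp: "{M. ?x M \<noteq> 0} \<subseteq> F ` A"
    by (auto simp: gen_def elim!: sum.not_neutral_contains_not_neutral split: if_splits)
  have "pairing ?x h = (\<Sum>M\<in>F ` A. ?x M * h M)"
    unfolding pairing_def using assms supp by (intro sum.mono_neutral_left) auto
  also have "\<dots> = (\<Sum>a\<in>A. \<Sum>M\<in>F ` A. c a * (gen (F a) M * h M))"
    by (simp add: sum_distrib_right mult.assoc sum.swap[of _ A])
  also have "\<dots> = (\<Sum>a\<in>A. c a * h (F a))"
  proof (rule sum.cong[OF refl])
    fix a assume "a \<in> A"
    have "(\<Sum>M\<in>F ` A. gen (F a) M * h M) = (\<Sum>M\<in>F ` A. if M = F a then h M else 0)"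
      by (rule sum.cong) (auto simp: gen_def)
    then show "(\<Sum>M\<in>F ` A. c a * (gen (F a) M * h M)) = c a * h (F a)"
      using assms \<open>a \<in> A\<close> by (simp add: sum_distrib_left[symmetric] sum.delta)
  qed
  finally show ?thesis .
qed

lemma lin_ext_comb:
  assumes "finite A"
  shows "lin_ext g (\<lambda>N. \<Sum>a\<in>A. c a * gen (F a) N) N = (\<Sum>a\<in>A. c a * gen (g (F a)) N)"
proof -
  have "{M. (\<Sum>a\<in>A. c a * gen (F a) M) \<noteq> 0} \<subseteq> F ` A"
    by (auto simp: gen_def elim!: sum.not_neutral_contains_not_neutral split: if_splits)
  then have "finite {M. (\<Sum>a\<in>A. c a * gen (F a) M) \<noteq> 0}"
    using assms finite_subset by blast
  then show ?thesis by (simp add: lin_ext_eq_pairing pairing_comb assms)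
qed

lemma sum_mult_sum_swap:
  fixes f :: "'a \<Rightarrow> 'c::semiring_0"
  shows "(\<Sum>a\<in>A. f a * (\<Sum>b\<in>B. g a b * h b)) = (\<Sum>b\<in>B. (\<Sum>a\<in>A. f a * g a b) * h b)"
  by (simp add: sum_distrib_left sum_distrib_right mult.assoc sum.swap[of _ A])

definition is_identity :: "('o, 'a, 'z) cat_scheme \<Rightarrow> 'a \<Rightarrow> bool" where
  "is_identity D a \<longleftrightarrow> a = Idm D (Dom D a)"

definition identity_reflecting :: "('o, 'a, 'z) cat_scheme \<Rightarrow> bool" where
  "identity_reflecting D \<longleftrightarrow>
     (\<forall>a\<in>Ar D. Dom D a \<in> Ob D \<and> Cod D a \<in> Ob D) \<and>
     (\<forall>x\<in>Ob D. Idm D x \<in> Ar D \<and> Dom D (Idm D x) = x \<and> Cod D (Idm D x) = x) \<and>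
     (\<forall>f\<in>Ar D. \<forall>g\<in>Ar D. Cod D f = Dom D g \<longrightarrow>
        Dom D (Comp D g f) = Dom D f \<and> Cod D (Comp D g f) = Cod D g \<and>
        (is_identity D (Comp D g f) \<longleftrightarrow> is_identity D f \<and> is_identity D g))"

definition semisimple_module :: "('o, 'a, 'z) cat_scheme \<Rightarrow> ('o \<Rightarrow> nat) \<Rightarrow> ('o, 'a, 'k::field) module" where
  "semisimple_module D d = (d, \<lambda>a. if is_identity D a then 1\<^sub>m (d (Dom D a))
                                 else 0\<^sub>m (d (Cod D a)) (d (Dom D a)))"

definition simple_module :: "('o, 'a, 'z) cat_scheme \<Rightarrow> 'o \<Rightarrow> ('o, 'a, 'k::field) module" where
  "simple_module D x = semisimple_module D (\<lambda>y. if y = x then 1 else 0)"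

definition simple_comb :: "('o, 'a, 'z) cat_scheme \<Rightarrow> ('o \<Rightarrow> int) \<Rightarrow> ('o, 'a, 'k::field) module \<Rightarrow> int" where
  "simple_comb D c = (\<lambda>N. \<Sum>x\<in>Ob D. c x * gen (simple_module D x) N)"

definition total_dim :: "(('o, 'a, 'k) module \<Rightarrow> int) \<Rightarrow> 'o \<Rightarrow> int" where
  "total_dim x t = pairing x (\<lambda>M. int (fst M t))"

definition gr_eq :: "'k::field itself \<Rightarrow> ('o, 'a, 'z) cat_scheme \<Rightarrow>
    (('o, 'a, 'k) module \<Rightarrow> int) \<Rightarrow> (('o, 'a, 'k) module \<Rightarrow> int) \<Rightarrow> bool" where
  "gr_eq K D x y \<longleftrightarrow> (\<lambda>N. x N - y N) \<in> Rel K D"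

lemma gr_eq_refl: "gr_eq K D x x"
  by (simp add: gr_eq_def Rel_def zspan.zspan_zero)

lemma gr_eq_add: "gr_eq K D x x' \<Longrightarrow> gr_eq K D y y' \<Longrightarrow> gr_eq K D (\<lambda>N. x N + y N) (\<lambda>N. x' N + y' N)"
  unfolding gr_eq_def Rel_def by (drule (1) zspan_add_closed) (simp add: algebra_simps)

lemma gr_eq_diff: "gr_eq K D x x' \<Longrightarrow> gr_eq K D y y' \<Longrightarrow> gr_eq K D (\<lambda>N. x N - y N) (\<lambda>N. x' N - y' N)"
  unfolding gr_eq_def Rel_def by (drule (1) zspan_diff_closed) (simp add: algebra_simps)

lemma gr_eq_mult: "gr_eq K D x y \<Longrightarrow> gr_eq K D (\<lambda>N. c * x N) (\<lambda>N. c * y N)"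
  unfolding gr_eq_def Rel_def by (drule zspan_mult_closed[of _ _ c]) (simp add: algebra_simps)

lemma gr_eq_sym: "gr_eq K D x y \<Longrightarrow> gr_eq K D y x"
  using gr_eq_mult[of K D x y "-1"] by (simp add: gr_eq_def)

lemma gr_eq_trans [trans]: "gr_eq K D x y \<Longrightarrow> gr_eq K D y z \<Longrightarrow> gr_eq K D x z"
  using gr_eq_add[of K D x y "\<lambda>N. y N - z N" "\<lambda>N. 0"] by (simp add: gr_eq_def)

lemma gr_eq_sum:
  "(\<And>a. a \<in> A \<Longrightarrow> gr_eq K D (f a) (g a)) \<Longrightarrow>
     gr_eq K D (\<lambda>N. \<Sum>a\<in>A. f a N) (\<lambda>N. \<Sum>a\<in>A. g a N)"
  unfolding gr_eq_def Rel_def by (drule zspan_sum_closed) (simp add: sum_subtractf)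

lemma gr_eq_0_iff: "gr_eq K D x (\<lambda>_. 0) \<longleftrightarrow> x \<in> Rel K D"
  by (simp add: gr_eq_def)

lemma gr_eq_iso_dsum:
  assumes "M \<in> Mods K D" "M1 \<in> Mods K D" "M2 \<in> Mods K D" "iso_mod D M (dsum D M1 M2)"
  shows "gr_eq K D (gen M) (\<lambda>N. gen M1 N + gen M2 N)"
proof -
  have "(\<lambda>N. gen M N - gen M1 N - gen M2 N) \<in> Rel K D"
    unfolding Rel_def
    by (rule zspan_generator, rule CollectI, rule exI[of _ M], rule exI[of _ M1], rule exI[of _ M2])
      (use assms in simp)
  then show ?thesis unfolding gr_eq_def by (simp add: diff_diff_eq)
qed

lemma gr_eq_zero_if_double:
  assumes "gr_eq K D x (\<lambda>N. x N + x N)"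
  shows "gr_eq K D x (\<lambda>_. 0)"
  using gr_eq_diff[OF gr_eq_sym[OF assms] gr_eq_refl[of K D x]] by simp

lemma invertible_one_mat: "invertible_mat (1\<^sub>m n :: 'k::field mat)"
  unfolding invertible_mat_def inverts_mat_def by (intro conjI exI[of _ "1\<^sub>m n"]) auto

lemma iso_mod_if_agree:
  assumes M: "M \<in> Mods K D" and "\<forall>x\<in>Ob D. fst N x = fst M x" and "\<forall>a\<in>Ar D. snd N a = snd M a"
  shows "iso_mod D M (N :: ('o, 'a, 'k::field) module)"
  unfolding iso_mod_def
proof (intro exI[of _ "\<lambda>x. 1\<^sub>m (fst M x)"] conjI ballI)
  fix x assume "x \<in> Ob D"
  then show "1\<^sub>m (fst M x) \<in> carrier_mat (fst N x) (fst M x)" "invertible_mat (1\<^sub>m (fst M x) :: 'k mat)"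
    using assms(2) invertible_one_mat by simp_all
next
  fix a assume "a \<in> Ar D"
  moreover have "snd M a \<in> carrier_mat (fst M (Cod D a)) (fst M (Dom D a))" if "a \<in> Ar D"
    using M that unfolding Mods_def is_module_def by (cases M) auto
  ultimately show "1\<^sub>m (fst M (Cod D a)) * snd M a = snd N a * 1\<^sub>m (fst M (Dom D a))"
    using assms(3) by simp
qed

lemma FG_subset_Rel_if_empty:
  assumes "Ob D = {}" "Ar D = {}"
  shows "FG K D \<subseteq> Rel K D"
proof -
  have "gen M \<in> Rel K D" if M: "M \<in> Mods K D" for M
  proof -
    have "iso_mod D M (dsum D M M)" unfolding iso_mod_def using assms by simp
    then show ?thesis
      using gr_eq_zero_if_double[OF gr_eq_iso_dsum[OF M M M]] by (simp add: gr_eq_0_iff)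
  qed
  then have "{gen M | M. M \<in> Mods K D} \<subseteq> Rel K D" by blast
  then show ?thesis unfolding FG_def Rel_def by (rule zspan_subset_zspan)
qed

context
  fixes D :: "('o, 'a, 'z) cat_scheme"
  assumes D: "identity_reflecting D"
begin

lemma identity_reflectingD:
  "a \<in> Ar D \<Longrightarrow> Dom D a \<in> Ob D" "a \<in> Ar D \<Longrightarrow> Cod D a \<in> Ob D"
  "x \<in> Ob D \<Longrightarrow> Idm D x \<in> Ar D" "x \<in> Ob D \<Longrightarrow> Dom D (Idm D x) = x" "x \<in> Ob D \<Longrightarrow> Cod D (Idm D x) = x"
  "f \<in> Ar D \<Longrightarrow> g \<in> Ar D \<Longrightarrow> Cod D f = Dom D g \<Longrightarrow> Dom D (Comp D g f) = Dom D f"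
  "f \<in> Ar D \<Longrightarrow> g \<in> Ar D \<Longrightarrow> Cod D f = Dom D g \<Longrightarrow> Cod D (Comp D g f) = Cod D g"
  "f \<in> Ar D \<Longrightarrow> g \<in> Ar D \<Longrightarrow> Cod D f = Dom D g \<Longrightarrow>
     is_identity D (Comp D g f) \<longleftrightarrow> is_identity D f \<and> is_identity D g"
  using D unfolding identity_reflecting_def by blast+

lemma Cod_eq_Dom_if_identity:
  assumes "a \<in> Ar D" "is_identity D a"
  shows "Cod D a = Dom D a"
proof -
  have "a = Idm D (Dom D a)" using assms(2) unfolding is_identity_def .
  then have "Cod D a = Cod D (Idm D (Dom D a))" by (rule arg_cong)
  also have "\<dots> = Dom D a" using identity_reflectingD(1,5) assms(1) by blast
  finally show ?thesis .
qed

lemma semisimple_action_Comp: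
  assumes f: "f \<in> Ar D" and g: "g \<in> Ar D" and fg: "Cod D f = Dom D g"
  shows "snd (semisimple_module D d :: ('o, 'a, 'k::field) module) (Comp D g f) =
    snd (semisimple_module D d) g * snd (semisimple_module D d :: ('o, 'a, 'k) module) f"
proof -
  note Comp = identity_reflectingD(6-8)[OF f g fg]
  have "Cod D f = Dom D f" if "is_identity D f" using Cod_eq_Dom_if_identity[OF f that] .
  moreover have "Cod D g = Dom D g" if "is_identity D g" using Cod_eq_Dom_if_identity[OF g that] .
  ultimately show ?thesis using Comp fg by (auto simp: semisimple_module_def)
qed

text \<open>The arrow set need not be closed under composition, so \<open>\<rho>\<close> is also prescribed on
  composites.\<close>
lemma is_module_if_agrees_semisimple:
  assumes agree: "\<And>a. a \<in> Ar D \<or> (\<exists>f\<in>Ar D. \<exists>g\<in>Ar D. Cod D f = Dom D g \<and> a = Comp D g f) \<Longrightarrow>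
      \<rho> a = snd (semisimple_module D d) a"
  shows "is_module K D (d, \<rho>)"
proof -
  have carrier: "\<rho> a \<in> carrier_mat (d (Cod D a)) (d (Dom D a))" if "a \<in> Ar D" for a
    using agree[of a] that Cod_eq_Dom_if_identity[OF that] by (auto simp: semisimple_module_def)
  have unit: "\<rho> (Idm D x) = 1\<^sub>m (d x)" if "x \<in> Ob D" for x
    using agree[of "Idm D x"] that identity_reflectingD(3,4) by (simp add: semisimple_module_def is_identity_def)
  have comp: "\<rho> (Comp D g f) = \<rho> g * \<rho> f"
    if "f \<in> Ar D" "g \<in> Ar D" "Cod D f = Dom D g" for f g
  proof -
    have "\<rho> (Comp D g f) = snd (semisimple_module D d) (Comp D g f)"
      by (rule agree) (use that in auto)
    also have "\<dots> = snd (semisimple_module D d) g * snd (semisimple_module D d) f"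
      by (rule semisimple_action_Comp[OF that])
    also have "\<dots> = \<rho> g * \<rho> f" using agree that by simp
    finally show ?thesis .
  qed
  show ?thesis unfolding is_module_def prod.case using carrier unit comp by blast
qed

lemma semisimple_module_in_Mods: "semisimple_module D d \<in> Mods K D"
  using is_module_if_agrees_semisimple[of "snd (semisimple_module D d)" d]
  by (simp add: Mods_def semisimple_module_def)

lemma gr_eq_semisimple_add:
  "gr_eq K D (gen (semisimple_module D (\<lambda>x. d1 x + d2 x)))
     (\<lambda>N. gen (semisimple_module D d1) N + gen (semisimple_module D d2) N)"
proof (rule gr_eq_iso_dsum[OF semisimple_module_in_Mods semisimple_module_in_Mods semisimple_module_in_Mods])
  have "\<forall>a\<in>Ar D. snd (dsum D (semisimple_module D d1) (semisimple_module D d2)) a =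
      snd (semisimple_module D (\<lambda>x. d1 x + d2 x) :: ('o, 'a, 'k::field) module) a"
  proof
    fix a assume a: "a \<in> Ar D"
    show "snd (dsum D (semisimple_module D d1) (semisimple_module D d2)) a =
      snd (semisimple_module D (\<lambda>x. d1 x + d2 x) :: ('o, 'a, 'k::field) module) a"
      using Cod_eq_Dom_if_identity[OF a] by (simp add: dsum_def semisimple_module_def)
  qed
  moreover have "\<forall>x\<in>Ob D. fst (dsum D (semisimple_module D d1) (semisimple_module D d2)) x =
      fst (semisimple_module D (\<lambda>x. d1 x + d2 x) :: ('o, 'a, 'k::field) module) x"
    by (simp add: dsum_def semisimple_module_def)
  ultimately show "iso_mod D (semisimple_module D (\<lambda>x. d1 x + d2 x))
      (dsum D (semisimple_module D d1) (semisimple_module D d2) :: ('o, 'a, 'k::field) module)"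
    by (rule iso_mod_if_agree[OF semisimple_module_in_Mods, rotated])
qed

lemma gr_eq_semisimple_zero: "gr_eq K D (gen (semisimple_module D (\<lambda>_. 0))) (\<lambda>_. 0)"
  by (rule gr_eq_zero_if_double[OF gr_eq_semisimple_add[of K "\<lambda>_. 0" "\<lambda>_. 0", unfolded add_0_left]])

lemma gr_eq_gen_if_agree:
  assumes M: "M \<in> Mods K D" and M': "M' \<in> Mods K D"
    and agree: "\<forall>x\<in>Ob D. fst M' x = fst M x" "\<forall>a\<in>Ar D. snd M' a = snd M a"
  shows "gr_eq K D (gen M) (gen M')"
proof -
  let ?Z = "semisimple_module D (\<lambda>_. 0) :: ('o, 'a, 'k::field) module"
  have "snd (dsum D M' ?Z) a = snd M a" if "a \<in> Ar D" for a
  proof -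
    have "snd M' a \<in> carrier_mat (fst M' (Cod D a)) (fst M' (Dom D a))"
      using M' that unfolding Mods_def is_module_def by (cases M') auto
    then show ?thesis
      using agree(2) that by (intro eq_matI) (auto simp: dsum_def semisimple_module_def)
  qed
  then have "iso_mod D M (dsum D M' ?Z)"
    using agree(1) by (intro iso_mod_if_agree[OF M]) (simp_all add: dsum_def semisimple_module_def)
  then have "gr_eq K D (gen M) (\<lambda>N. gen M' N + gen ?Z N)"
    by (rule gr_eq_iso_dsum[OF M M' semisimple_module_in_Mods])
  also have "gr_eq K D \<dots> (\<lambda>N. gen M' N + 0)"
    by (rule gr_eq_add[OF gr_eq_refl gr_eq_semisimple_zero])
  finally show ?thesis by simp
qed

lemma gr_eq_semisimple_single:
  "gr_eq K D (gen (semisimple_module D (\<lambda>y. if y = x then k else 0)))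
     (\<lambda>N. int k * gen (simple_module D x) N)"
proof (induction k)
  case 0
  then show ?case using gr_eq_semisimple_zero by simp
next
  case (Suc k)
  have split: "(\<lambda>y. (if y = x then k else 0) + (if y = x then 1 else 0)) = (\<lambda>y. if y = x then Suc k else 0)"
    by auto
  have "gr_eq K D (gen (semisimple_module D (\<lambda>y. if y = x then Suc k else 0)))
      (\<lambda>N. gen (semisimple_module D (\<lambda>y. if y = x then k else 0)) N + gen (simple_module D x) N)"
    using gr_eq_semisimple_add[of K "\<lambda>y. if y = x then k else 0" "\<lambda>y. if y = x then 1 else 0"]
    unfolding simple_module_def split .
  also have "gr_eq K D \<dots> (\<lambda>N. int k * gen (simple_module D x) N + gen (simple_module D x) N)"
    by (rule gr_eq_add[OF Suc gr_eq_refl])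
  finally show ?case by (simp add: algebra_simps)
qed

lemma gr_eq_semisimple_restrict:
  assumes "finite A"
  shows "gr_eq K D (gen (semisimple_module D (\<lambda>y. if y \<in> A then d y else 0)))
     (\<lambda>N. \<Sum>x\<in>A. int (d x) * gen (simple_module D x) N)"
  using assms
proof (induction A rule: finite_induct)
  case empty
  then show ?case using gr_eq_semisimple_zero by simp
next
  case (insert x A)
  have split: "(\<lambda>y. (if y \<in> A then d y else 0) + (if y = x then d x else 0)) =
      (\<lambda>y. if y \<in> insert x A then d y else 0)"
    using insert(2) by auto
  have "gr_eq K D (gen (semisimple_module D (\<lambda>y. if y \<in> insert x A then d y else 0)))
      (\<lambda>N. gen (semisimple_module D (\<lambda>y. if y \<in> A then d y else 0)) N +
           gen (semisimple_module D (\<lambda>y. if y = x then d x else 0)) N)"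
    using gr_eq_semisimple_add[of K "\<lambda>y. if y \<in> A then d y else 0" "\<lambda>y. if y = x then d x else 0"]
    unfolding split .
  also have "gr_eq K D \<dots> (\<lambda>N. (\<Sum>x\<in>A. int (d x) * gen (simple_module D x) N) +
      int (d x) * gen (simple_module D x) N)"
    by (rule gr_eq_add[OF insert.IH gr_eq_semisimple_single])
  finally show ?case using insert(1,2) by (simp add: add.commute)
qed

lemma gr_eq_semisimple_simple_comb:
  assumes "finite (Ob D)"
  shows "gr_eq K D (gen (semisimple_module D d)) (simple_comb D (\<lambda>x. int (d x)))"
proof -
  have "gr_eq K D (gen (semisimple_module D d))
      (gen (semisimple_module D (\<lambda>y. if y \<in> Ob D then d y else 0)))"
    using identity_reflectingD(1,2)
    by (intro gr_eq_gen_if_agree semisimple_module_in_Mods) (auto simp: semisimple_module_def)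
  also have "gr_eq K D \<dots> (simple_comb D (\<lambda>x. int (d x)))"
    unfolding simple_comb_def by (rule gr_eq_semisimple_restrict[OF assms])
  finally show ?thesis .
qed

lemma gr_eq_semisimple_if_discrete:
  assumes discrete: "\<forall>a\<in>Ar D. is_identity D a" and M: "M \<in> Mods K D"
  shows "gr_eq K D (gen M) (gen (semisimple_module D (fst M)))"
proof (rule gr_eq_gen_if_agree[OF M semisimple_module_in_Mods])
  show "\<forall>a\<in>Ar D. snd (semisimple_module D (fst M)) a = snd M a"
  proof
    fix a assume a: "a \<in> Ar D"
    then have "a = Idm D (Dom D a)" using discrete unfolding is_identity_def by blast
    then have "snd M a = snd M (Idm D (Dom D a))" by (rule arg_cong)
    also have "\<dots> = 1\<^sub>m (fst M (Dom D a))"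
      using M identity_reflectingD(1)[OF a] unfolding Mods_def is_module_def by (cases M) auto
    finally show "snd (semisimple_module D (fst M)) a = snd M a"
      using discrete a by (simp add: semisimple_module_def)
  qed
qed (simp add: semisimple_module_def)

lemma simple_comb_in_FG:
  assumes "finite (Ob D)"
  shows "simple_comb D c \<in> FG K D"
proof -
  have "gen (simple_module D x) \<in> {gen M | M. M \<in> Mods K D}" for x :: 'o
    unfolding simple_module_def using semisimple_module_in_Mods by blast
  then show ?thesis
    unfolding simple_comb_def FG_def by (intro zspan_sum_closed zspan_mult_closed zspan_generator)
qed

lemma gr_eq_simple_comb_total_dim:
  assumes "finite (Ob D)" and discrete: "\<forall>a\<in>Ar D. is_identity D a" and x: "x \<in> FG K D"
  shows "gr_eq K D x (simple_comb D (total_dim x))"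
proof -
  have fin: "finite {M. x M \<noteq> 0}" and supp: "{M. x M \<noteq> 0} \<subseteq> Mods K D"
    using zspan_gen_support[OF x[unfolded FG_def]] by auto
  have "gr_eq K D (\<lambda>N. \<Sum>M\<in>{M. x M \<noteq> 0}. x M * gen M N)
      (\<lambda>N. \<Sum>M\<in>{M. x M \<noteq> 0}. x M * simple_comb D (\<lambda>t. int (fst M t)) N)"
  proof (intro gr_eq_sum gr_eq_mult)
    fix M assume "M \<in> {M. x M \<noteq> 0}"
    then have "M \<in> Mods K D" using supp by blast
    then show "gr_eq K D (gen M) (simple_comb D (\<lambda>t. int (fst M t)))"
      by (rule gr_eq_trans[OF gr_eq_semisimple_if_discrete[OF discrete] gr_eq_semisimple_simple_comb[OF assms(1)]])
  qed
  then have "gr_eq K D x (\<lambda>N. \<Sum>M\<in>{M. x M \<noteq> 0}. x M * simple_comb D (\<lambda>t. int (fst M t)) N)"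
    unfolding sum_gen_support[OF fin] .
  also have "\<dots> = simple_comb D (total_dim x)"
    by (simp add: simple_comb_def total_dim_def pairing_def sum_distrib_left sum_distrib_right
        mult.assoc sum.swap[of _ "Ob D"])
  finally show ?thesis .
qed

end

lemma total_dim_simple_comb:
  fixes D :: "('o, 'a, 'z) cat_scheme"
  assumes "finite (Ob D)" "x \<in> Ob D"
  shows "total_dim (simple_comb D c :: ('o, 'a, 'k::field) module \<Rightarrow> int) x = c x"
proof -
  have "total_dim (simple_comb D c :: ('o, 'a, 'k) module \<Rightarrow> int) x =
      (\<Sum>y\<in>Ob D. c y * int (fst (simple_module D y :: ('o, 'a, 'k) module) x))"
    using assms(1) by (simp add: total_dim_def simple_comb_def pairing_comb)
  also have "\<dots> = (\<Sum>y\<in>Ob D. if x = y then c y else 0)"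
    by (rule sum.cong) (auto simp: simple_module_def semisimple_module_def)
  finally show ?thesis using assms by simp
qed

lemma lin_ext_simple_comb:
  "finite (Ob D) \<Longrightarrow>
    lin_ext g (simple_comb D c) N = (\<Sum>x\<in>Ob D. c x * gen (g (simple_module D x)) N)"
  unfolding simple_comb_def by (rule lin_ext_comb)

section \<open>The comparison map\<close>

lemma dim_cochain_eq_total_dim:
  "\<sigma> \<in> nondeg_strings C n \<Longrightarrow> dim_cochain C n x \<sigma> = total_dim x \<sigma>"
  by (simp add: dim_cochain_def total_dim_def pairing_def)

lemma nerve_cochainsD: "c \<in> nerve_cochains C n \<Longrightarrow> \<sigma> \<notin> nondeg_strings C n \<Longrightarrow> c \<sigma> = 0"
  unfolding nerve_cochains_def by blast

context direct_category
begin

lemma is_identity_G: "is_identity (G_cat C n) l \<longleftrightarrow> l = id_ladder C (fst l)"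
  by (simp add: is_identity_def)

lemma identity_reflecting_G: "identity_reflecting (G_cat C n)"
  unfolding identity_reflecting_def is_identity_G
proof (intro conjI ballI impI)
  fix l assume "l \<in> Ar (G_cat C n)"
  then show "Dom (G_cat C n) l \<in> Ob (G_cat C n)" "Cod (G_cat C n) l \<in> Ob (G_cat C n)"
    using G_arrowD(1,2) by simp_all
next
  fix s assume "s \<in> Ob (G_cat C n)"
  then show "Idm (G_cat C n) s \<in> Ar (G_cat C n)" by (simp add: G_cat_def) (metis prod.collapse)
  show "Dom (G_cat C n) (Idm (G_cat C n) s) = s" "Cod (G_cat C n) (Idm (G_cat C n) s) = s" by simp_all
next
  fix f g assume "f \<in> Ar (G_cat C n)" "g \<in> Ar (G_cat C n)" "Cod (G_cat C n) f = Dom (G_cat C n) g"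
  then show "Dom (G_cat C n) (Comp (G_cat C n) g f) = Dom (G_cat C n) f"
    "Cod (G_cat C n) (Comp (G_cat C n) g f) = Cod (G_cat C n) g"
    "(Comp (G_cat C n) g f = id_ladder C (fst (Comp (G_cat C n) g f))) \<longleftrightarrow>
       f = id_ladder C (fst f) \<and> g = id_ladder C (fst g)"
    using G_comp_eq_id_iff by simp_all
qed

lemma G_arrow_or_composite_cases:
  assumes "a \<in> Ar (G_cat C n) \<or>
    (\<exists>f\<in>Ar (G_cat C n). \<exists>g\<in>Ar (G_cat C n). fst (snd f) = fst g \<and> a = comp_ladder C g f)"
  shows "fst a \<in> nondeg_strings C n" "a = id_ladder C (fst a) \<or> nonid_rungs C n a"
proof -
  have "fst a \<in> nondeg_strings C n \<and> (a = id_ladder C (fst a) \<or> nonid_rungs C n a)"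
    using assms
  proof
    assume "\<exists>f\<in>Ar (G_cat C n). \<exists>g\<in>Ar (G_cat C n). fst (snd f) = fst g \<and> a = comp_ladder C g f"
    then obtain f g where fg: "f \<in> Ar (G_cat C n)" "g \<in> Ar (G_cat C n)" "fst (snd f) = fst g"
      and a: "a = comp_ladder C g f" by blast
    have "fst a = fst f" using a by simp
    show ?thesis
    proof (cases "f = id_ladder C (fst f) \<and> g = id_ladder C (fst g)")
      case True
      then have "a = id_ladder C (fst a)"
        using G_comp_id_ladders[OF fg] a \<open>fst a = fst f\<close> by simp
      then show ?thesis using G_arrowD(1)[OF fg(1)] \<open>fst a = fst f\<close> by simp
    next
      case False
      then show ?thesis using nonid_rungs_G_comp[OF fg] a G_arrowD(1)[OF fg(1)] by simp
    qed
  qed (use G_arrowD in blast)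
  then show "fst a \<in> nondeg_strings C n" "a = id_ladder C (fst a) \<or> nonid_rungs C n a" by simp_all
qed

lemma face_lad_simple_module:
  assumes i: "i \<le> Suc m"
    and a: "a \<in> Ar (G_cat C (Suc m)) \<or> (\<exists>f\<in>Ar (G_cat C (Suc m)). \<exists>g\<in>Ar (G_cat C (Suc m)).
      fst (snd f) = fst g \<and> a = comp_ladder C g f)"
  shows "snd (simple_module (G_cat C m) \<sigma>) (face_lad C i a) =
    (snd (semisimple_module (G_cat C (Suc m)) (\<lambda>\<tau>. if face_str C i \<tau> = \<sigma> then 1 else 0)) a :: 'k::field mat)"
proof -
  note cases = G_arrow_or_composite_cases[OF a]
  show ?thesis
  proof (cases "a = id_ladder C (fst a)")
    case True
    then have "face_lad C i a = id_ladder C (face_str C i (fst a))"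
      using face_lad_id_ladder[OF cases(1) i] by metis
    then show ?thesis
      using True by (simp add: simple_module_def semisimple_module_def is_identity_G)
  next
    case False
    then have "nonid_rungs C m (face_lad C i a)"
      using cases(2) nonid_rungs_face_lad i by blast
    then have "face_lad C i a \<noteq> id_ladder C (face_str C i (fst a))"
      using not_nonid_rungs_id_ladder[OF fst_face_str_in_Ob[OF cases(1) i]] by metis
    then show ?thesis
      using False by (simp add: simple_module_def semisimple_module_def is_identity_G)
  qed
qed

lemma gr_eq_pb_face_simple_module:
  fixes K :: "'k::field itself"
  assumes i: "i \<le> Suc m"
  shows "gr_eq K (G_cat C (Suc m)) (gen (pb_face C i (simple_module (G_cat C m) \<sigma>)))
    (simple_comb (G_cat C (Suc m)) (\<lambda>\<tau>. if face_str C i \<tau> = \<sigma> then 1 else 0))"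
proof -
  let ?M = "pb_face C i (simple_module (G_cat C m) \<sigma>) :: (('o, 'a) str, ('o, 'a) lad, 'k) module"
  let ?d = "\<lambda>\<tau>. if face_str C i \<tau> = \<sigma> then 1 else 0 :: nat"
  have M: "?M = (?d, \<lambda>a. snd (simple_module (G_cat C m) \<sigma>) (face_lad C i a))"
    by (simp add: pb_face_def simple_module_def semisimple_module_def o_def)
  have "?M \<in> Mods K (G_cat C (Suc m))"
    unfolding M Mods_def
    by (rule CollectI, rule is_module_if_agrees_semisimple[OF identity_reflecting_G])
      (auto intro: face_lad_simple_module[OF i])
  then have "gr_eq K (G_cat C (Suc m)) (gen ?M) (gen (semisimple_module (G_cat C (Suc m)) ?d))"
  proof (rule gr_eq_gen_if_agree[OF identity_reflecting_G _ semisimple_module_in_Mods[OF identity_reflecting_G]])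
    show "\<forall>x\<in>Ob (G_cat C (Suc m)). fst (semisimple_module (G_cat C (Suc m)) ?d :: (('o, 'a) str, ('o, 'a) lad, 'k) module) x =
        fst ?M x"
      by (simp add: M semisimple_module_def)
    show "\<forall>a\<in>Ar (G_cat C (Suc m)). snd (semisimple_module (G_cat C (Suc m)) ?d) a = snd ?M a"
    proof
      fix a assume "a \<in> Ar (G_cat C (Suc m))"
      then show "snd (semisimple_module (G_cat C (Suc m)) ?d) a = snd ?M a"
        unfolding M snd_conv by (intro face_lad_simple_module[OF i, symmetric] disjI1)
    qed
  qed
  also have "gr_eq K (G_cat C (Suc m)) \<dots> (simple_comb (G_cat C (Suc m)) (\<lambda>\<tau>. int (?d \<tau>)))"
    by (rule gr_eq_semisimple_simple_comb[OF identity_reflecting_G]) (simp add: finite_nondeg_strings)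
  finally have "gr_eq K (G_cat C (Suc m)) (gen ?M) (simple_comb (G_cat C (Suc m)) (\<lambda>\<tau>. int (?d \<tau>)))" .
  moreover have "(\<lambda>\<tau>. int (?d \<tau>)) = (\<lambda>\<tau>. if face_str C i \<tau> = \<sigma> then 1 else 0)" by auto
  ultimately show ?thesis by (simp only:)
qed

lemma sum_nondeg_strings_delta:
  assumes "c \<in> nerve_cochains C m"
  shows "(\<Sum>\<sigma>\<in>nondeg_strings C m. c \<sigma> * (if y = \<sigma> then 1 else 0)) = c y"
  using nerve_cochainsD[OF assms] finite_nondeg_strings
  by (simp add: if_distrib sum.delta sum.delta' cong: if_cong)

lemma gr_eq_dgr_simple_comb:
  fixes K :: "'k::field itself"
  assumes c: "c \<in> nerve_cochains C m"
  shows "gr_eq K (G_cat C (Suc m)) (dgr C m (simple_comb (G_cat C m) c))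
    (simple_comb (G_cat C (Suc m)) (nerve_delta C m c))"
proof -
  let ?S = "\<lambda>\<tau>. gen (simple_module (G_cat C (Suc m)) \<tau> :: (('o, 'a) str, ('o, 'a) lad, 'k) module)"
  have "gr_eq K (G_cat C (Suc m)) (dgr C m (simple_comb (G_cat C m) c))
      (\<lambda>N. \<Sum>i\<le>Suc m. (-1) ^ i * (\<Sum>\<sigma>\<in>nondeg_strings C m. c \<sigma> *
         simple_comb (G_cat C (Suc m)) (\<lambda>\<tau>. if face_str C i \<tau> = \<sigma> then 1 else 0) N))"
    unfolding dgr_def lin_ext_simple_comb[OF finite_nondeg_strings[folded G_cat_simps(1)]] G_cat_simps(1)
    by (intro gr_eq_sum gr_eq_mult gr_eq_pb_face_simple_module) simp
  also have "\<dots> = (\<lambda>N. \<Sum>i\<le>Suc m. (-1) ^ i * (\<Sum>\<tau>\<in>nondeg_strings C (Suc m). c (face_str C i \<tau>) * ?S \<tau> N))"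
    by (simp only: simple_comb_def G_cat_simps(1) sum_mult_sum_swap sum_nondeg_strings_delta[OF c])
  also have "\<dots> = simple_comb (G_cat C (Suc m)) (nerve_delta C m c)"
    unfolding simple_comb_def G_cat_simps(1) sum_mult_sum_swap
    by (intro ext sum.cong) (simp_all add: nerve_delta_def)
  finally show ?thesis .
qed

end

lemma gr_cohom_vanishes_if_empty:
  assumes "0 < n" "Ob (cats n) = {}" "Ar (cats n) = {}"
  shows "gr_cohom_vanishes K C cats n"
  unfolding gr_cohom_vanishes_def
proof
  fix x assume "x \<in> gr_cocycles K C cats n"
  then have x: "x \<in> Rel K (cats n)"
    using FG_subset_Rel_if_empty[OF assms(2,3)] unfolding gr_cocycles_def by blast
  have "x \<in> {(\<lambda>N. dgr C (n - 1) y N + r N) | y r. y \<in> FG K (cats (n - 1)) \<and> r \<in> Rel K (cats n)}"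
    by (rule CollectI, rule exI[of _ "\<lambda>_. 0"], rule exI[of _ x]) (simp add: x dgr_def lin_ext_def FG_def zspan.zspan_zero)
  then show "x \<in> gr_coboundaries K C cats n"
    unfolding gr_coboundaries_def using assms(1) by simp
qed

context direct_category
begin

lemma dim_cochain_simple_comb:
  assumes "c \<in> nerve_cochains C n"
  shows "dim_cochain C n (simple_comb (G_cat C n) c :: (('o, 'a) str, ('o, 'a) lad, 'k::field) module \<Rightarrow> int) = c"
proof
  fix \<sigma>
  show "dim_cochain C n (simple_comb (G_cat C n) c :: (('o, 'a) str, ('o, 'a) lad, 'k) module \<Rightarrow> int) \<sigma> = c \<sigma>"
  proof (cases "\<sigma> \<in> nondeg_strings C n")
    case True
    then show ?thesis using total_dim_simple_comb[of "G_cat C n" \<sigma> c] finite_nondeg_strings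
      by (simp add: dim_cochain_eq_total_dim)
  next
    case False
    then show ?thesis using nerve_cochainsD[OF assms False] by (simp add: dim_cochain_def)
  qed
qed

lemma comparison_epiI:
  fixes K :: "'k::field itself"
  assumes "1 \<le> n"
  shows "comparison_epi K C n"
  unfolding comparison_epi_def
proof
  fix c assume c: "c \<in> nerve_cocycles C n"
  then have c_cochain: "c \<in> nerve_cochains C n" and "nerve_delta C n c = (\<lambda>_. 0)"
    unfolding nerve_cocycles_def by simp_all
  let ?x = "simple_comb (G_cat C n) c :: (('o, 'a) str, ('o, 'a) lad, 'k) module \<Rightarrow> int"
  have "dgr C n ?x \<in> Rel K (G_cat C (Suc n))"
    using gr_eq_dgr_simple_comb[OF c_cochain, of K] \<open>nerve_delta C n c = (\<lambda>_. 0)\<close>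
    by (simp add: simple_comb_def gr_eq_0_iff)
  then have "?x \<in> gr_cocycles K C (G_cat C) n"
    unfolding gr_cocycles_def
    using simple_comb_in_FG[OF identity_reflecting_G] finite_nondeg_strings by simp
  moreover have "(\<lambda>\<sigma>. dim_cochain C n ?x \<sigma> - c \<sigma>) = nerve_delta C (n - 1) (\<lambda>_. 0)"
    using dim_cochain_simple_comb[OF c_cochain] by (simp add: nerve_delta_def fun_eq_iff)
  then have "(\<lambda>\<sigma>. dim_cochain C n ?x \<sigma> - c \<sigma>) \<in> nerve_coboundaries C n"
    using assms by (simp add: nerve_coboundaries_def nerve_cochains_def)
  ultimately show "\<exists>x\<in>gr_cocycles K C (G_cat C) n.
      (\<lambda>\<sigma>. dim_cochain C n x \<sigma> - c \<sigma>) \<in> nerve_coboundaries C n" by blast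
qed

lemma comparison_monoI:
  fixes K :: "'k::field itself"
  assumes n: "comp_length C < 2 * n"
  shows "comparison_mono K C n"
  unfolding comparison_mono_def
proof (intro ballI impI)
  fix x assume "x \<in> gr_cocycles K C (G_cat C) n" and "dim_cochain C n x \<in> nerve_coboundaries C n"
  then have x: "x \<in> FG K (G_cat C n)" unfolding gr_cocycles_def by simp
  obtain m where m: "n = Suc m" using n by (cases n) auto
  with \<open>dim_cochain C n x \<in> nerve_coboundaries C n\<close>
  obtain c where c: "c \<in> nerve_cochains C m" and dim_x: "dim_cochain C n x = nerve_delta C m c"
    unfolding nerve_coboundaries_def by auto
  have "\<forall>a\<in>Ar (G_cat C n). is_identity (G_cat C n) a"
    using G_discrete[OF n] is_identity_G by blast
  then have "gr_eq K (G_cat C n) x (simple_comb (G_cat C n) (total_dim x))"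
    using gr_eq_simple_comb_total_dim[OF identity_reflecting_G _ _ x] finite_nondeg_strings by simp
  also have "simple_comb (G_cat C n) (total_dim x) = simple_comb (G_cat C n) (dim_cochain C n x)"
    unfolding simple_comb_def by (intro ext sum.cong) (simp_all add: dim_cochain_eq_total_dim)
  also have "gr_eq K (G_cat C n) \<dots> (dgr C m (simple_comb (G_cat C m) c))"
    unfolding dim_x unfolding m by (rule gr_eq_sym[OF gr_eq_dgr_simple_comb[OF c]])
  finally have "x \<in> {(\<lambda>N. dgr C m y N + r N) | y r. y \<in> FG K (G_cat C m) \<and> r \<in> Rel K (G_cat C n)}"
    using simple_comb_in_FG[OF identity_reflecting_G] finite_nondeg_strings
    unfolding gr_eq_def by force
  then show "x \<in> gr_coboundaries K C (G_cat C) n"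
    unfolding gr_coboundaries_def m by simp
qed

end

theorem proposition4p10:
  fixes C :: "('o, 'a) cat" and N :: nat
  assumes "is_cat C" and "finite_cat C" and "direct C"
    and "comp_length C = N" and "N \<ge> 1"
  shows "(\<forall>n>N. gr_cohom_vanishes TYPE('k::field) C (E_cat C) n \<and>
                gr_cohom_vanishes TYPE('k) C (G_cat C) n) \<and>
         (\<forall>n\<ge>N div 2 + 1. comparison_mono TYPE('k) C n \<and> comparison_epi TYPE('k) C n) \<and>
         (\<forall>n. 1 \<le> n \<and> n \<le> N div 2 \<longrightarrow> comparison_epi TYPE('k) C n)"
proof -
  interpret direct_category C using assms(1-3) by unfold_locales
  have "nondeg_strings C n = {}" if "N < n" for n
    using nondeg_strings_empty assms(4) that by simp
  then have "gr_cohom_vanishes TYPE('k) C (E_cat C) n \<and> gr_cohom_vanishes TYPE('k) C (G_cat C) n"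
    if "N < n" for n
    using that by (intro conjI gr_cohom_vanishes_if_empty) (auto simp: E_cat_def G_cat_def)
  moreover have "comparison_mono TYPE('k) C n" if "N div 2 + 1 \<le> n" for n
    using that assms(4) by (intro comparison_monoI) linarith
  ultimately show ?thesis using comparison_epiI by auto
qed

end
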